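(* Let $n\ge 2$ and $s=(2,3,\ldots,n)$ (a sequence of length $n-1$). Then the $s$-derangement polynomial satisfies $d_{n-1}^s(z)=d_n(z)$, the classical derangement polynomial. Moreover, the local $h$-polynomial of the barycentric subdivision of the $(n-1)$-simplex $2^{[n]}$ equals the local $h^\ast$-polynomial $\ell^\ast(P_{n-1}^s;z)$ of the $s$-lecture hall simplex $P_{n-1}^s$.
   Context: $P_{m}^s=\{x\in\mathbb{R}^{m}: 0\le x_1/s_1\le\cdots\le x_{m}/s_{m}\le 1\}$ for $s=(s_1,\ldots,s_m)$; for a lattice $d$-simplex $\Delta=\mathrm{conv}(v^{(0)},\ldots,v^{(d)})\subset\mathbb{R}^m$, $\ell^\ast(\Delta;z)=\sum_{x\in\Pi^\circ_\Delta\cap\mathbb{Z}^{m+1}}z^{x_{m+1}}$ with $\Pi^\circ_\Delta=\{\sum_i\lambda_i(v^{(i)},1): 0<\lambda_i<1\}$; $d_m^s(z):=\ell^\ast(P_m^s;z)$. The derangement polynomial is $d_n(z)=\sum_{\pi\in\mathfrak{D}_n}z^{\mathrm{exc}(\pi)}$, where $\mathfrak{D}_n$ is the set of permutations of $[n]$ without fixed points and $\mathrm{exc}(\pi)=|\{i:\pi_i>i\}|$. For a $(d-1)$-dimensional simplicial complex $\Omega$ with $f_{i-1}$ faces of dimension $i-1$ ($f_{-1}=1$), $h(\Omega;z)=\sum_{i=0}^d f_{i-1}z^i(1-z)^{d-i}$. If $\Omega$ is a subdivision of the simplex $2^V$, $|V|=n$, and for $F\subseteq V$ $\Omega_F$ denotes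 the restriction of $\Omega$ to the face $F$ (the subcomplex subdividing $2^F$; $h(\Omega_\emptyset;z)=1$), the local $h$-polynomial is $\ell_V(\Omega_V;z)=\sum_{F\subseteq V}(-1)^{n-|F|}h(\Omega_F;z)$. *)

theory Defs
  imports "HOL-Computational_Algebra.Polynomial" "HOL-Combinatorics.Permutations"
begin

text \<open>A lattice d-simplex in R^m is given by its vertices v i (i = 0..d), with
  v i j the (j+1)-st coordinate (j < m).  The coefficient of z^k in l^*(Delta;z)
  counts the lattice points x in Z^(m+1) of the open fundamental parallelepiped
  with last coordinate x_(m+1) = k.  The first m coordinates are the list x.\<close>

definition lstar_coeff :: "nat \<Rightarrow> nat \<Rightarrow> (nat \<Rightarrow> nat \<Rightarrow> int) \<Rightarrow> int \<Rightarrow> nat" where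
  "lstar_coeff m d v k = card {x :: int list. length x = m \<and>
     (\<exists>c :: nat \<Rightarrow> real. (\<forall>i\<le>d. 0 < c i \<and> c i < 1) \<and>
        (\<forall>j<m. real_of_int (x ! j) = (\<Sum>i\<le>d. c i * real_of_int (v i j))) \<and>
        real_of_int k = (\<Sum>i\<le>d. c i))}"

text \<open>Since the last coordinate is a sum of d+1 numbers in (0,1), only
  0 \<le> k \<le> d contribute; summing over 0..d+1 loses nothing.\<close>
definition lstar :: "nat \<Rightarrow> nat \<Rightarrow> (nat \<Rightarrow> nat \<Rightarrow> int) \<Rightarrow> int poly" where
  "lstar m d v = (\<Sum>k\<le>d+1. monom (int (lstar_coeff m d v (int k))) k)"

text \<open>s is 0-indexed: s j is s_(j+1).  P_m^s has vertices v^(i), i = 0..m, where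
  v^(i)_(j+1) = 0 if j+1 \<le> i and s_(j+1) otherwise.\<close>
definition lecture_hall_vertex :: "(nat \<Rightarrow> int) \<Rightarrow> nat \<Rightarrow> nat \<Rightarrow> int" where
  "lecture_hall_vertex s i j = (if i \<le> j then s j else 0)"

definition lecture_hall_simplex :: "nat \<Rightarrow> (nat \<Rightarrow> int) \<Rightarrow> (nat \<Rightarrow> real) set" where
  "lecture_hall_simplex m s = {x. (\<forall>j\<ge>m. x j = 0) \<and> 0 \<le> x 0 / real_of_int (s 0) \<and>
      (\<forall>j. Suc j < m \<longrightarrow> x j / real_of_int (s j) \<le> x (Suc j) / real_of_int (s (Suc j))) \<and> x (m - 1) / real_of_int (s (m - 1)) \<le> 1}"

definition s_derangement_poly :: "nat \<Rightarrow> (nat \<Rightarrow> int) \<Rightarrow> int poly" where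
  "s_derangement_poly m s = lstar m m (lecture_hall_vertex s)"

definition exc :: "nat \<Rightarrow> (nat \<Rightarrow> nat) \<Rightarrow> nat" where
  "exc n \<pi> = card {i \<in> {1..n}. \<pi> i > i}"

definition derangements :: "nat \<Rightarrow> (nat \<Rightarrow> nat) set" where
  "derangements n = {\<pi>. \<pi> permutes {1..n} \<and> (\<forall>i\<in>{1..n}. \<pi> i \<noteq> i)}"

definition derangement_poly :: "nat \<Rightarrow> int poly" where
  "derangement_poly n = (\<Sum>\<pi>\<in>derangements n. monom 1 (exc n \<pi>))"

text \<open>A simplicial complex is given by its set of faces (finite vertex sets),
  d is such that the complex is (d-1)-dimensional; f_(i-1) = number of faces with i vertices.\<close>
definition h_poly :: "'a set set \<Rightarrow> nat \<Rightarrow> int poly" where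
  "h_poly \<Omega> d = (\<Sum>i\<le>d. smult (int (card {G\<in>\<Omega>. card G = i})) (monom 1 i * [:1, -1:] ^ (d - i)))"

text \<open>Omega F is the restriction of the subdivision to the face F of 2^V; it
  subdivides 2^F and so has dimension |F|-1.\<close>
definition local_h :: "'a set \<Rightarrow> ('a set \<Rightarrow> 'b set set) \<Rightarrow> int poly" where
  "local_h V \<Omega> = (\<Sum>F\<in>Pow V. smult ((-1) ^ (card V - card F)) (h_poly (\<Omega> F) (card F)))"

text \<open>Barycentric subdivision: vertices are nonempty faces, faces are chains;
  its restriction to F consists of chains of nonempty subsets of F.\<close>
definition barycentric_sd :: "'a set \<Rightarrow> 'a set set set" where
  "barycentric_sd F = {C. C \<subseteq> Pow F - {{}} \<and> (\<forall>A\<in>C. \<forall>B\<in>C. A \<subseteq> B \<or> B \<subseteq> A)}"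

end

theory Submission
  imports Defs
begin

(* Both polynomials equal d_n.

   Local h-side: for a finite set F of naturals let A_F be the excedance polynomial of the
   permutations of F, and E_k p = (1 + k z) p + z (1 - z) p'.  Adjoining a new maximum x to F
   gives A_(F + x) = E_|F| A_F.  The h-polynomial H_F of the barycentric subdivision of 2^F obeys
   the same recursion: a chain of F + x is a chain C of F together with a cut in C and a flag,
   and E_k multiplies the basis polynomial z^i (1 - z)^(k - i) by i + 1.  Hence A_F = H_F.
   Grouping permutations by their non-fixed points gives A_F = sum over G <= F of d_G, and
   Moebius inversion turns the alternating sum defining the local h-polynomial into d_n.

   Lecture hall side (s = (2, ..., m + 1)): a lattice point of the open parallelepiped is an
   integer sequence x with x_j / (j + 2) - x_(j-1) / (j + 1) in (0, 1) (x_(-1) = 0), at height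
   k = floor (x_(m-1) / (m + 1)) + 1, where m + 1 must not divide x_(m-1).  Splitting each
   x_j into quotient and residue modulo j + 2 yields a transfer-matrix recursion for the
   residue classes, which is the recursion of the derangement polynomials refined by the
   value v = sigma (n + 1): deleting v from its cycle maps these derangements bijectively onto
   the permutations of [n] fixing at most n. *)

section \<open>Excedance polynomials\<close>

definition eulerian_op :: "nat \<Rightarrow> int poly \<Rightarrow> int poly" where
  "eulerian_op k p = p * [:1, int k:] + [:0, 1, -1:] * pderiv p"

lemma eulerian_op_add: "eulerian_op k (p + q) = eulerian_op k p + eulerian_op k q"
  unfolding eulerian_op_def pderiv_add by (simp only: distrib_left distrib_right add_ac)

lemma eulerian_op_sum: "eulerian_op k (sum f A) = (\<Sum>x\<in>A. eulerian_op k (f x))"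
  by (induction A rule: infinite_finite_induct) (simp_all add: eulerian_op_add eulerian_op_def[of k 0])

lemma monom_mult_linear: "monom (1::int) e * [:a, b:] = monom a e + monom b (Suc e)"
proof -
  have "[:a, b:] = monom a 0 + monom b 1" by (simp add: monom_0 monom_Suc)
  then show ?thesis by (simp add: algebra_simps mult_monom)
qed

lemma eulerian_op_monom:
  "eulerian_op k (monom 1 e) = monom (int e + 1) e + monom (int k - int e) (Suc e)"
proof -
  have lin: "monom 1 e * [:1, int k:] = monom 1 e + monom (int k) (Suc e)"
    by (rule monom_mult_linear)
  have deriv: "[:0, 1, -1:] * pderiv (monom 1 e) = monom (int e) e + monom (- int e) (Suc e)"
  proof (cases e)
    case (Suc f)
    have "[:0, 1, -1:] = monom (1::int) 1 + monom (-1) 2"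
      by (simp add: monom_Suc monom_0 numeral_2_eq_2)
    then show ?thesis
      using Suc by (simp add: pderiv_monom algebra_simps mult_monom)
  qed simp
  have "monom (int e + 1) e = monom (int e) e + monom 1 e"
    "monom (int k - int e) (Suc e) = monom (int k) (Suc e) + monom (- int e) (Suc e)"
    by (simp_all add: add_monom)
  then show ?thesis unfolding eulerian_op_def lin deriv by (simp only: add_ac)
qed

definition exc_on :: "nat set \<Rightarrow> (nat \<Rightarrow> nat) \<Rightarrow> nat" where
  "exc_on F p = card {i\<in>F. p i > i}"

definition eulerian_poly_on :: "nat set \<Rightarrow> int poly" where
  "eulerian_poly_on F = (\<Sum>p\<in>{p. p permutes F}. monom 1 (exc_on F p))"

lemma exc_on_le_card: "finite F \<Longrightarrow> exc_on F q \<le> card F"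
  unfolding exc_on_def by (rule card_mono) auto

lemma exc_on_insert_fixed:
  assumes "q permutes F" and "x \<notin> F"
  shows "exc_on (insert x F) q = exc_on F q"
proof -
  have "q x = x" using assms by (simp add: permutes_not_in)
  then have "{i \<in> insert x F. q i > i} = {i\<in>F. q i > i}" by auto
  then show ?thesis by (simp add: exc_on_def)
qed

text \<open>Redirecting \<open>j\<close> to a new maximal element \<open>x\<close> makes \<open>j\<close> an excedance; all other
  positions keep their status.\<close>
lemma exc_on_insert_transpose:
  assumes q: "q permutes F" and fin: "finite F" and x: "x \<notin> F" "\<forall>y\<in>F. y < x" and j: "j \<in> F"
  shows "exc_on (insert x F) (Transposition.transpose x (q j) \<circ> q)
    = (if q j > j then exc_on F q else Suc (exc_on F q))"
proof -
  let ?r = "Transposition.transpose x (q j) \<circ> q"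
  have qF: "\<And>i. i \<in> F \<Longrightarrow> q i \<in> F" using q by (simp add: permutes_in_image)
  have "q x = x" using q x by (simp add: permutes_not_in)
  then have rx: "?r x = q j" by simp
  have "\<And>i. i \<in> F \<Longrightarrow> q i = q j \<longleftrightarrow> i = j"
    using q j by (metis permutes_inj_on inj_on_eq_iff)
  then have ri: "\<And>i. i \<in> F \<Longrightarrow> ?r i = (if i = j then x else q i)"
    using qF x by (auto simp: transpose_def)
  have "\<not> ?r x > x" using rx qF[OF j] x by auto
  moreover have "\<And>i. i \<in> F \<Longrightarrow> (?r i > i) = (i = j \<or> q i > i)"
    using ri x by auto
  ultimately have "{i \<in> insert x F. ?r i > i} = insert j {i\<in>F. q i > i}"
    using j by auto
  then show ?thesis unfolding exc_on_def using fin j by (auto simp: card_insert_if)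
qed

lemma sum_exc_on_insert_transpose:
  assumes q: "q permutes F" and fin: "finite F" and x: "x \<notin> F" "\<forall>y\<in>F. y < x"
  shows "(\<Sum>b\<in>insert x F. monom 1 (exc_on (insert x F) (Transposition.transpose x b \<circ> q)))
    = eulerian_op (card F) (monom 1 (exc_on F q))"
proof -
  define e where "e = exc_on F q"
  define E where "E = {j\<in>F. q j > j}"
  have cardE: "card E = e" by (simp add: E_def e_def exc_on_def)
  have cardE': "card (F - E) = card F - e"
    using fin cardE by (simp add: card_Diff_subset E_def)
  have "(\<Sum>b\<in>F. monom (1::int) (exc_on (insert x F) (Transposition.transpose x b \<circ> q)))
      = (\<Sum>j\<in>F. monom 1 (exc_on (insert x F) (Transposition.transpose x (q j) \<circ> q)))"
    using permutes_imp_bij[OF q] by (rule sum.reindex_bij_betw[symmetric])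
  also have "\<dots> = (\<Sum>j\<in>F. if j \<in> E then monom 1 e else monom 1 (Suc e))"
    using exc_on_insert_transpose[OF q fin x] by (auto simp: e_def E_def intro!: sum.cong)
  also have "\<dots> = monom (int e) e + monom (int (card F - e)) (Suc e)"
  proof -
    have "F \<inter> E = E" "F \<inter> - E = F - E" by (auto simp: E_def)
    then show ?thesis
      using fin cardE cardE' by (simp add: sum.If_cases of_nat_monom mult_monom)
  qed
  finally show ?thesis
    using fin x q exc_on_le_card[OF fin, of q]
    by (simp add: exc_on_insert_fixed eulerian_op_monom e_def of_nat_diff add_monom)
qed

lemma eulerian_poly_on_insert:
  assumes fin: "finite F" and x: "x \<notin> F" "\<forall>y\<in>F. y < x"
  shows "eulerian_poly_on (insert x F) = eulerian_op (card F) (eulerian_poly_on F)"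
proof -
  have "eulerian_poly_on (insert x F) = (\<Sum>q\<in>{p. p permutes F}. \<Sum>b\<in>insert x F.
      monom 1 (exc_on (insert x F) (Transposition.transpose x b \<circ> q)))"
    unfolding eulerian_poly_on_def
    by (subst sum_over_permutations_insert[OF fin x(1)]) (rule sum.swap)
  also have "\<dots> = (\<Sum>q\<in>{p. p permutes F}. eulerian_op (card F) (monom 1 (exc_on F q)))"
    using sum_exc_on_insert_transpose[OF _ fin x] by simp
  finally show ?thesis by (simp add: eulerian_poly_on_def eulerian_op_sum)
qed

section \<open>The h-polynomial of the barycentric subdivision\<close>

definition h_basis :: "nat \<Rightarrow> nat \<Rightarrow> int poly" where
  "h_basis d i = monom 1 i * [:1, -1:] ^ (d - i)"

definition bary_h_poly :: "'a set \<Rightarrow> int poly" where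
  "bary_h_poly F = h_poly (barycentric_sd F) (card F)"

lemma finite_barycentric_sd: "finite F \<Longrightarrow> finite (barycentric_sd F)"
  unfolding barycentric_sd_def by (rule finite_subset[of _ "Pow (Pow F)"]) auto

lemma finite_barycentric_sd_member: "finite F \<Longrightarrow> C \<in> barycentric_sd F \<Longrightarrow> finite C"
  unfolding barycentric_sd_def by (auto intro: finite_subset[of _ "Pow F"])

text \<open>Members of a chain have pairwise distinct cardinalities in \<open>{1..card F}\<close>.\<close>
lemma card_le_if_barycentric_sd:
  assumes F: "finite F" and C: "C \<in> barycentric_sd F"
  shows "card C \<le> card F"
proof -
  have sub: "C \<subseteq> Pow F - {{}}" and ch: "\<forall>A\<in>C. \<forall>B\<in>C. A \<subseteq> B \<or> B \<subseteq> A"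
    using C by (auto simp: barycentric_sd_def)
  have "inj_on card C"
  proof (rule inj_onI)
    fix A B assume "A \<in> C" "B \<in> C" "card A = card B"
    moreover have "finite A" "finite B" using \<open>A \<in> C\<close> \<open>B \<in> C\<close> sub F by (auto intro: finite_subset)
    ultimately show "A = B" using ch by (metis card_subset_eq)
  qed
  moreover have "card ` C \<subseteq> {1..card F}"
  proof
    fix k assume "k \<in> card ` C"
    then obtain A where "A \<in> C" "k = card A" by auto
    moreover have "A \<subseteq> F" "A \<noteq> {}" using \<open>A \<in> C\<close> sub by auto
    moreover have "finite A" using \<open>A \<subseteq> F\<close> F finite_subset by auto
    ultimately show "k \<in> {1..card F}" using F by (auto simp: card_mono Suc_le_eq card_gt_0_iff)
  qed
  ultimately show ?thesis by (metis card_atLeastAtMost card_image card_mono diff_Suc_1 finite_atLeastAtMost)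
qed

lemma bary_h_poly_eq_sum:
  assumes "finite F"
  shows "bary_h_poly F = (\<Sum>C\<in>barycentric_sd F. h_basis (card F) (card C))"
proof -
  have "bary_h_poly F = (\<Sum>i\<le>card F. \<Sum>C\<in>{C \<in> barycentric_sd F. card C = i}. h_basis (card F) (card C))"
    unfolding bary_h_poly_def h_poly_def h_basis_def by (intro sum.cong refl) (simp add: of_nat_poly)
  also have "\<dots> = (\<Sum>C\<in>barycentric_sd F. h_basis (card F) (card C))"
    by (rule sum.group) (use assms finite_barycentric_sd card_le_if_barycentric_sd in auto)
  finally show ?thesis .
qed

lemma eulerian_op_h_basis:
  assumes "i \<le> n"
  shows "eulerian_op n (h_basis n i) = smult (int i + 1) (h_basis n i)"
proof -
  define X where "X = (monom 1 1 :: int poly)"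
  define q where "q = ([:1, -1:] :: int poly)"
  define m where "m = n - i"
  have nm: "n = m + i" using assms by (simp add: m_def)
  have qX: "q = 1 - X" by (simp add: X_def q_def monom_Suc monom_0 one_pCons)
  have w: "[:0, 1, -1:] = X * q" "pCons 0 q = X * q" by (simp_all add: X_def q_def monom_Suc monom_0)
  have l: "[:1, int n:] = 1 + of_nat n * X" by (simp add: X_def monom_Suc monom_0 of_nat_poly one_pCons)
  have dq: "pderiv (q ^ m) = - (of_nat m * q ^ (m - 1))"
    by (simp add: pderiv_power q_def pderiv_pCons of_nat_poly)
  have dX: "pderiv (monom 1 i) = (of_nat i :: int poly) * monom 1 (i - 1)"
    by (simp add: pderiv_monom of_nat_monom mult_monom)
  have a: "q * (of_nat m * q ^ (m - 1)) = of_nat m * q ^ m" by (cases m) (simp_all add: algebra_simps)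
  have b: "X * (of_nat i * monom 1 (i - 1)) = (of_nat i :: int poly) * monom 1 i"
    by (cases i) (simp_all add: X_def mult_monom algebra_simps)
  have "eulerian_op n (h_basis n i) = monom 1 i * q ^ m * (1 + of_nat n * X)
      + X * q * (monom 1 i * (- (of_nat m * q ^ (m - 1))) + q ^ m * (of_nat i * monom 1 (i - 1)))"
    unfolding eulerian_op_def h_basis_def l w pderiv_mult dq dX m_def[symmetric] q_def[symmetric]
    by (simp add: w)
  also have "\<dots> = monom 1 i * q ^ m * (1 + of_nat n * X) - X * monom 1 i * (q * (of_nat m * q ^ (m - 1)))
      + q * q ^ m * (X * (of_nat i * monom 1 (i - 1)))"
    by (simp add: algebra_simps)
  also have "\<dots> = monom 1 i * q ^ m * (1 + of_nat n * X - of_nat m * X + of_nat i * q)"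
    unfolding a b by (simp add: algebra_simps)
  also have "1 + of_nat n * X - of_nat m * X + of_nat i * q = 1 + (of_nat i :: int poly)"
    unfolding nm qX of_nat_add by (simp add: algebra_simps)
  also have "(1 + of_nat i :: int poly) = [:int i + 1:]" by (simp add: of_nat_poly one_pCons)
  finally show ?thesis by (simp add: h_basis_def m_def q_def)
qed

lemma h_basis_Suc_add: "i \<le> n \<Longrightarrow> h_basis (Suc n) i + h_basis (Suc n) (Suc i) = h_basis n i"
proof -
  assume "i \<le> n"
  then have e: "Suc n - i = Suc (n - i)" "Suc n - Suc i = n - i" by simp_all
  define X where "X = (monom 1 1 :: int poly)"
  define q where "q = ([:1, -1:] :: int poly)"
  have m: "monom (1::int) (Suc i) = monom 1 i * X" by (simp add: mult_monom X_def)
  have qX: "q + X = 1" by (simp add: X_def q_def monom_Suc monom_0 one_pCons)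
  have "monom 1 i * q ^ Suc (n - i) + monom 1 i * X * q ^ (n - i) = monom 1 i * q ^ (n - i) * (q + X)"
    by (simp add: algebra_simps)
  then show ?thesis unfolding h_basis_def e m q_def[symmetric] qX by simp
qed

text \<open>Every chain of nonempty subsets of \<open>insert x F\<close> arises exactly once from a chain \<open>C\<close>
  of \<open>F\<close>, a cut \<open>B \<in> insert {} C\<close> and a flag \<open>f\<close>: add \<open>x\<close> to the members of \<open>C\<close> not
  below \<open>B\<close>, and add the member \<open>insert x B\<close> iff \<open>f\<close>.\<close>
definition lift_set :: "'a \<Rightarrow> 'a set \<Rightarrow> 'a set \<Rightarrow> 'a set" where
  "lift_set x B A = (if A \<subseteq> B then A else insert x A)"

definition lift_chain :: "'a \<Rightarrow> 'a set \<Rightarrow> 'a set set \<Rightarrow> bool \<Rightarrow> 'a set set" where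
  "lift_chain x B C f = lift_set x B ` C \<union> (if f then {insert x B} else {})"

definition chain_remove :: "'a \<Rightarrow> 'a set set \<Rightarrow> 'a set set" where
  "chain_remove x C = (\<lambda>A. A - {x}) ` C - {{}}"

definition chain_cut :: "'a \<Rightarrow> 'a set set \<Rightarrow> 'a set" where
  "chain_cut x C = \<Union>{A\<in>C. x \<notin> A}"

lemma mem_lift_chain:
  "Y \<in> lift_chain x B C f \<longleftrightarrow>
    (Y \<in> C \<and> Y \<subseteq> B) \<or> (\<exists>A\<in>C. \<not> A \<subseteq> B \<and> Y = insert x A) \<or> (f \<and> Y = insert x B)"
  unfolding lift_chain_def lift_set_def by auto

lemma finite_chain_Union_mem:
  assumes "finite S" "S \<noteq> {}" "\<forall>A\<in>S. \<forall>B\<in>S. A \<subseteq> B \<or> B \<subseteq> A"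
  shows "\<Union>S \<in> S"
  using assms
proof (induction S rule: finite_ne_induct)
  case (insert a S)
  then have "\<Union>S \<in> S" by blast
  moreover have "a \<subseteq> \<Union>S \<or> \<Union>S \<subseteq> a" using insert.prems \<open>\<Union>S \<in> S\<close> by blast
  ultimately show ?case by (auto simp: sup.absorb1 sup.absorb2)
qed simp

locale chain_lift =
  fixes x :: 'a and F :: "'a set" and C :: "'a set set" and B :: "'a set"
  assumes x_notin: "x \<notin> F" and chain: "C \<in> barycentric_sd F" and cut: "B \<in> insert {} C"
begin

lemma member_subset: "A \<in> C \<Longrightarrow> A \<subseteq> F \<and> A \<noteq> {}"
  using chain by (auto simp: barycentric_sd_def)

lemma members_comparable: "A \<in> C \<Longrightarrow> A' \<in> C \<Longrightarrow> A \<subseteq> A' \<or> A' \<subseteq> A"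
  using chain by (auto simp: barycentric_sd_def)

lemma cut_subset: "B \<subseteq> F"
  using cut member_subset by auto

lemma cut_comparable: "A \<in> C \<Longrightarrow> A \<subseteq> B \<or> B \<subseteq> A"
  using cut members_comparable by auto

lemma x_notin_member: "A \<in> C \<Longrightarrow> x \<notin> A"
  using member_subset x_notin by auto

lemma x_notin_cut: "x \<notin> B"
  using cut_subset x_notin by auto

lemma lift_chain_in: "lift_chain x B C f \<in> barycentric_sd (insert x F)"
proof -
  have "lift_set x B A \<subseteq> lift_set x B A' \<or> lift_set x B A' \<subseteq> lift_set x B A"
    if "A \<in> C" "A' \<in> C" for A A'
    using members_comparable[OF that] by (auto simp: lift_set_def)
  moreover have "lift_set x B A \<subseteq> insert x B \<or> insert x B \<subseteq> lift_set x B A" if "A \<in> C" for A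
    using cut_comparable[OF that] by (auto simp: lift_set_def)
  moreover have "lift_set x B A \<in> Pow (insert x F) - {{}}" if "A \<in> C" for A
    using member_subset[OF that] by (auto simp: lift_set_def)
  moreover have "insert x B \<in> Pow (insert x F) - {{}}" using cut_subset by auto
  ultimately show ?thesis
    unfolding lift_chain_def barycentric_sd_def by (cases f) (simp_all add: image_subset_iff, blast+)
qed

lemma chain_remove_lift_chain: "chain_remove x (lift_chain x B C f) = C"
proof -
  have "(\<lambda>A. A - {x}) ` lift_chain x B C f = C \<union> (if f then {B} else {})"
  proof
    show "(\<lambda>A. A - {x}) ` lift_chain x B C f \<subseteq> C \<union> (if f then {B} else {})"
      using x_notin_member x_notin_cut by (auto simp: mem_lift_chain)
    show "C \<union> (if f then {B} else {}) \<subseteq> (\<lambda>A. A - {x}) ` lift_chain x B C f"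
    proof
      fix A assume "A \<in> C \<union> (if f then {B} else {})"
      then consider "A \<in> C" "A \<subseteq> B" | "A \<in> C" "\<not> A \<subseteq> B" | "f" "A = B"
        by (auto split: if_splits)
      then show "A \<in> (\<lambda>A. A - {x}) ` lift_chain x B C f"
      proof cases
        case 1 then show ?thesis
          using x_notin_member[of A] by (intro image_eqI[of _ _ A]) (auto simp: mem_lift_chain)
      next
        case 2 then show ?thesis
          using x_notin_member[of A] by (intro image_eqI[of _ _ "insert x A"]) (auto simp: mem_lift_chain)
      next
        case 3 then show ?thesis
          using x_notin_cut by (intro image_eqI[of _ _ "insert x B"]) (auto simp: mem_lift_chain)
      qed
    qed
  qed
  moreover have "{} \<notin> C" using member_subset by auto
  ultimately show ?thesis using cut unfolding chain_remove_def by auto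
qed

lemma chain_cut_lift_chain: "chain_cut x (lift_chain x B C f) = B"
proof -
  have "{A \<in> lift_chain x B C f. x \<notin> A} = {A\<in>C. A \<subseteq> B}"
    by (auto simp: mem_lift_chain x_notin_member)
  moreover have "\<Union>{A\<in>C. A \<subseteq> B} = B" using cut by auto
  ultimately show ?thesis by (simp add: chain_cut_def)
qed

lemma insert_cut_mem_lift_chain_iff: "insert x B \<in> lift_chain x B C f \<longleftrightarrow> f"
proof -
  have "insert x B \<noteq> lift_set x B A" if "A \<in> C" for A
    using x_notin_member[OF that] x_notin_cut by (auto simp: lift_set_def insert_ident)
  then show ?thesis by (auto simp: lift_chain_def)
qed

lemma card_lift_chain:
  assumes "finite F"
  shows "card (lift_chain x B C f) = card C + (if f then 1 else 0)"
proof -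
  have "inj_on (lift_set x B) C"
  proof (rule inj_onI)
    fix A A' assume "A \<in> C" "A' \<in> C" "lift_set x B A = lift_set x B A'"
    then show "A = A'"
      using x_notin_member[of A] x_notin_member[of A']
      by (cases "A \<subseteq> B"; cases "A' \<subseteq> B") (auto simp: lift_set_def insert_ident)
  qed
  moreover have "finite C" using finite_barycentric_sd_member[OF assms chain] .
  moreover have "insert x B \<notin> lift_set x B ` C" using insert_cut_mem_lift_chain_iff[of False]
    by (simp add: lift_chain_def)
  ultimately show ?thesis by (simp add: lift_chain_def card_image)
qed

end

lemma mem_chain_remove: "A \<in> chain_remove x C \<longleftrightarrow> A \<noteq> {} \<and> (\<exists>A'\<in>C. A = A' - {x})"
  unfolding chain_remove_def by auto

lemma chain_remove_in:
  assumes "C \<in> barycentric_sd (insert x F)"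
  shows "chain_remove x C \<in> barycentric_sd F"
proof -
  have "chain_remove x C \<subseteq> Pow F - {{}}"
  proof
    fix A assume "A \<in> chain_remove x C"
    then obtain A' where "A' \<in> C" "A = A' - {x}" "A \<noteq> {}" by (auto simp: mem_chain_remove)
    then show "A \<in> Pow F - {{}}" using assms by (auto simp: barycentric_sd_def)
  qed
  moreover have "A \<subseteq> A' \<or> A' \<subseteq> A"
    if AA': "A \<in> chain_remove x C" "A' \<in> chain_remove x C" for A A'
  proof -
    obtain Y Y' where "Y \<in> C" "Y' \<in> C" "A = Y - {x}" "A' = Y' - {x}"
      using AA' unfolding mem_chain_remove by blast
    then show ?thesis using assms unfolding barycentric_sd_def by blast
  qed
  ultimately show ?thesis by (simp add: barycentric_sd_def)
qed

lemma subset_chain_cut_iff: "A \<in> C \<Longrightarrow> A \<subseteq> chain_cut x C \<longleftrightarrow> x \<notin> A"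
  unfolding chain_cut_def by auto

lemma chain_cut_empty_or_mem:
  assumes "finite F" and "C \<in> barycentric_sd F"
  shows "chain_cut x C = {} \<or> chain_cut x C \<in> C"
proof (cases "{A\<in>C. x \<notin> A} = {}")
  case False
  have "finite C" using finite_barycentric_sd_member[OF assms] .
  then have "\<Union>{A\<in>C. x \<notin> A} \<in> {A\<in>C. x \<notin> A}"
    using False assms(2) by (intro finite_chain_Union_mem) (auto simp: barycentric_sd_def)
  then show ?thesis by (simp add: chain_cut_def)
qed (auto simp: chain_cut_def)

context
  fixes x :: 'a and F :: "'a set" and C :: "'a set set"
  assumes fin: "finite F" and chain: "C \<in> barycentric_sd (insert x F)"
begin

lemma chain_cut_cases: "chain_cut x C = {} \<or> chain_cut x C \<in> C"
  using chain_cut_empty_or_mem[OF _ chain] fin by simp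

lemma lift_chain_chain_remove_subset:
  "lift_chain x (chain_cut x C) (chain_remove x C) (insert x (chain_cut x C) \<in> C) \<subseteq> C"
proof
  let ?B = "chain_cut x C"
  have ch: "\<And>A A'. A \<in> C \<Longrightarrow> A' \<in> C \<Longrightarrow> A \<subseteq> A' \<or> A' \<subseteq> A"
    using chain by (auto simp: barycentric_sd_def)
  have xB: "x \<notin> ?B" by (simp add: chain_cut_def)
  fix Y assume "Y \<in> lift_chain x ?B (chain_remove x C) (insert x ?B \<in> C)"
  then consider A where "A \<in> C" "Y = A - {x}" "Y \<noteq> {}" "Y \<subseteq> ?B"
    | A where "A \<in> C" "\<not> A - {x} \<subseteq> ?B" "Y = insert x (A - {x})"
    | "insert x ?B \<in> C" "Y = insert x ?B"
    unfolding mem_lift_chain Bex_def mem_chain_remove by blast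
  then show "Y \<in> C"
  proof cases
    case (1 A)
    show ?thesis
    proof (cases "x \<in> A")
      case True
      then have "?B \<subseteq> A"
        using ch[OF 1(1)] subset_chain_cut_iff[OF 1(1), of x] chain_cut_cases 1(3,4) by auto
      then have "Y = ?B" using 1 xB by auto
      then show ?thesis using 1 chain_cut_cases by auto
    qed (use 1 in simp)
  next
    case (2 A)
    then show ?thesis using subset_chain_cut_iff[OF 2(1), of x] by (metis Diff_subset insert_Diff subset_trans)
  qed simp
qed

lemma subset_lift_chain_chain_remove:
  "C \<subseteq> lift_chain x (chain_cut x C) (chain_remove x C) (insert x (chain_cut x C) \<in> C)"
proof
  let ?B = "chain_cut x C"
  fix Y assume Y: "Y \<in> C"
  show "Y \<in> lift_chain x ?B (chain_remove x C) (insert x ?B \<in> C)"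
  proof (cases "x \<in> Y")
    case False
    moreover have "{} \<notin> C" using chain by (auto simp: barycentric_sd_def)
    ultimately show ?thesis
      using Y subset_chain_cut_iff[OF Y, of x] by (force simp: mem_lift_chain mem_chain_remove)
  next
    case True
    show ?thesis
    proof (cases "Y - {x} \<subseteq> ?B")
      case True
      have "?B \<subseteq> Y \<or> Y \<subseteq> ?B" if "?B \<in> C" using that Y chain by (auto simp: barycentric_sd_def)
      then have "Y = insert x ?B"
        using True \<open>x \<in> Y\<close> chain_cut_cases by (auto simp: chain_cut_def)
      then show ?thesis using Y by (simp add: mem_lift_chain)
    next
      case False
      then have "Y - {x} \<in> chain_remove x C" using Y by (auto simp: mem_chain_remove)
      then show ?thesis using False \<open>x \<in> Y\<close> by (force simp: mem_lift_chain)
    qed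
  qed
qed

lemma lift_chain_chain_remove:
  "lift_chain x (chain_cut x C) (chain_remove x C) (insert x (chain_cut x C) \<in> C) = C"
  using lift_chain_chain_remove_subset subset_lift_chain_chain_remove by (rule equalityI)

end

lemma bij_betw_lift_chain:
  assumes fin: "finite F" and x: "x \<notin> F"
  shows "bij_betw (\<lambda>(C, B, f). lift_chain x B C f)
    (SIGMA C:barycentric_sd F. insert {} C \<times> UNIV) (barycentric_sd (insert x F))"
proof -
  define S where "S = (SIGMA C:barycentric_sd F. insert {} C \<times> (UNIV :: bool set))"
  define lift where "lift = (\<lambda>(C, B, f). lift_chain x B C f)"
  define split where "split = (\<lambda>C. (chain_remove x C, chain_cut x C, insert x (chain_cut x C) \<in> C))"
  have data: "chain_lift x F C B" if "(C, B, f) \<in> S" for C B f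
    using that x by (simp add: chain_lift_def S_def)
  have "bij_betw lift S (barycentric_sd (insert x F))"
  proof (rule bij_betw_byWitness[where f' = split])
    show "\<forall>p\<in>S. split (lift p) = p"
      using chain_lift.chain_remove_lift_chain[OF data] chain_lift.chain_cut_lift_chain[OF data]
        chain_lift.insert_cut_mem_lift_chain_iff[OF data] by (auto simp: lift_def split_def)
    show "\<forall>C\<in>barycentric_sd (insert x F). lift (split C) = C"
      using lift_chain_chain_remove[OF fin] by (simp add: lift_def split_def)
    show "lift ` S \<subseteq> barycentric_sd (insert x F)"
      using chain_lift.lift_chain_in[OF data] by (auto simp: lift_def)
    show "split ` barycentric_sd (insert x F) \<subseteq> S"
    proof (rule image_subsetI)
      fix C assume C: "C \<in> barycentric_sd (insert x F)"
      note chain_cut_cases[OF fin C]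
      moreover have "chain_cut x C - {x} = chain_cut x C" by (simp add: chain_cut_def)
      ultimately have "chain_cut x C \<in> insert {} (chain_remove x C)"
        unfolding insert_iff mem_chain_remove by metis
      then show "split C \<in> S" using chain_remove_in[OF C] by (simp add: split_def S_def)
    qed
  qed
  then show ?thesis by (simp add: lift_def S_def)
qed

lemma bary_h_poly_insert:
  assumes fin: "finite F" and x: "x \<notin> F"
  shows "bary_h_poly (insert x F) = eulerian_op (card F) (bary_h_poly F)"
proof -
  define n where "n = card F"
  have lift: "chain_lift x F C B" if "C \<in> barycentric_sd F" "B \<in> insert {} C" for C B
    using that x by (simp add: chain_lift_def)
  have "bary_h_poly (insert x F) = (\<Sum>C'\<in>barycentric_sd (insert x F). h_basis (Suc n) (card C'))"
    using fin x by (simp add: bary_h_poly_eq_sum n_def)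
  also have "\<dots> = (\<Sum>p\<in>(SIGMA C:barycentric_sd F. insert {} C \<times> UNIV).
      h_basis (Suc n) (card ((\<lambda>(C, B, f). lift_chain x B C f) p)))"
    by (rule sum.reindex_bij_betw[OF bij_betw_lift_chain[OF fin x], symmetric])
  also have "\<dots> = (\<Sum>C\<in>barycentric_sd F. \<Sum>(B, f)\<in>insert {} C \<times> UNIV.
      h_basis (Suc n) (card (lift_chain x B C f)))"
    by (subst sum.Sigma) (auto simp: case_prod_unfold fin finite_barycentric_sd
        finite_barycentric_sd_member[OF fin])
  also have "\<dots> = (\<Sum>C\<in>barycentric_sd F. \<Sum>B\<in>insert {} C. \<Sum>f\<in>UNIV.
      h_basis (Suc n) (card (lift_chain x B C f)))"
    by (simp add: sum.cartesian_product)
  also have "\<dots> = (\<Sum>C\<in>barycentric_sd F. eulerian_op n (h_basis n (card C)))"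
  proof (rule sum.cong[OF refl])
    fix C assume C: "C \<in> barycentric_sd F"
    have le: "card C \<le> n" using card_le_if_barycentric_sd[OF fin C] by (simp add: n_def)
    have "{} \<notin> C" using C by (auto simp: barycentric_sd_def)
    then have "card (insert {} C) = card C + 1"
      using finite_barycentric_sd_member[OF fin C] by simp
    moreover have "(\<Sum>f\<in>UNIV. h_basis (Suc n) (card (lift_chain x B C f))) = h_basis n (card C)"
      if "B \<in> insert {} C" for B
      using chain_lift.card_lift_chain[OF lift[OF C that] fin] h_basis_Suc_add[OF le]
      by (simp add: UNIV_bool add.commute)
    ultimately show "(\<Sum>B\<in>insert {} C. \<Sum>f\<in>UNIV. h_basis (Suc n) (card (lift_chain x B C f)))
        = eulerian_op n (h_basis n (card C))"
      by (simp add: eulerian_op_h_basis[OF le] of_nat_poly add.commute)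
  qed
  also have "\<dots> = eulerian_op n (bary_h_poly F)"
    using fin by (simp add: bary_h_poly_eq_sum eulerian_op_sum n_def)
  finally show ?thesis by (simp add: n_def)
qed

section \<open>The local h-polynomial\<close>

lemma eulerian_poly_on_eq_bary_h_poly:
  assumes "finite F"
  shows "eulerian_poly_on F = bary_h_poly F"
  using assms
proof (induction F rule: finite_linorder_max_induct)
  case empty
  have "{p. p permutes ({}::nat set)} = {id}" by auto
  moreover have sd: "barycentric_sd {} = {{}}" unfolding barycentric_sd_def by blast
  ultimately show ?case by (simp add: eulerian_poly_on_def exc_on_def bary_h_poly_eq_sum sd h_basis_def)
next
  case (insert x F)
  then have "x \<notin> F" by blast
  with insert show ?case by (simp add: eulerian_poly_on_insert bary_h_poly_insert)
qed

definition derangement_poly_on :: "nat set \<Rightarrow> int poly" where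
  "derangement_poly_on G =
    (\<Sum>p\<in>{p. p permutes G \<and> (\<forall>i\<in>G. p i \<noteq> i)}. monom 1 (exc_on G p))"

lemma permutes_with_support_iff:
  assumes "G \<subseteq> F"
  shows "p permutes F \<and> {i\<in>F. p i \<noteq> i} = G \<longleftrightarrow> p permutes G \<and> (\<forall>i\<in>G. p i \<noteq> i)"
proof
  assume p: "p permutes F \<and> {i\<in>F. p i \<noteq> i} = G"
  then have "\<forall>i\<in>F - G. p i = i" by blast
  then have "p permutes G" using p permutes_superset by blast
  with p show "p permutes G \<and> (\<forall>i\<in>G. p i \<noteq> i)" by blast
next
  assume p: "p permutes G \<and> (\<forall>i\<in>G. p i \<noteq> i)"
  then have "p permutes F" using assms permutes_subset by blast
  moreover have "{i\<in>F. p i \<noteq> i} = G" using p assms permutes_not_in[of p G] by blast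
  ultimately show "p permutes F \<and> {i\<in>F. p i \<noteq> i} = G" ..
qed

lemma exc_on_superset:
  assumes "p permutes G" and "G \<subseteq> F"
  shows "exc_on F p = exc_on G p"
proof -
  have "{i\<in>F. p i > i} = {i\<in>G. p i > i}"
    using assms(2) permutes_not_in[OF assms(1)] by (metis (lifting) less_irrefl subsetD)
  then show ?thesis by (simp add: exc_on_def)
qed

text \<open>Group the permutations of \<open>F\<close> by their set of non-fixed points.\<close>
lemma eulerian_poly_on_eq_sum_derangement_poly_on:
  assumes "finite F"
  shows "eulerian_poly_on F = (\<Sum>G\<in>Pow F. derangement_poly_on G)"
proof -
  have "eulerian_poly_on F = (\<Sum>G\<in>Pow F. \<Sum>p\<in>{p \<in> {p. p permutes F}. {i\<in>F. p i \<noteq> i} = G}.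
      monom 1 (exc_on F p))"
    unfolding eulerian_poly_on_def
    by (rule sum.group[symmetric]) (use assms finite_permutations in auto)
  also have "\<dots> = (\<Sum>G\<in>Pow F. derangement_poly_on G)"
  proof (rule sum.cong[OF refl])
    fix G assume "G \<in> Pow F"
    then have G: "G \<subseteq> F" by simp
    then have "{p \<in> {p. p permutes F}. {i\<in>F. p i \<noteq> i} = G} = {p. p permutes G \<and> (\<forall>i\<in>G. p i \<noteq> i)}"
      using permutes_with_support_iff[OF G] by blast
    then show "(\<Sum>p\<in>{p \<in> {p. p permutes F}. {i\<in>F. p i \<noteq> i} = G}. monom 1 (exc_on F p))
        = derangement_poly_on G"
      unfolding derangement_poly_on_def by (intro sum.cong) (simp_all add: exc_on_superset[OF _ G])
  qed
  finally show ?thesis .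
qed

lemma local_h_barycentric_sd_eq_derangement_poly:
  "local_h {1..n} barycentric_sd = derangement_poly n"
proof -
  have sign: "(- 1 :: int poly) ^ k * p = smult ((- 1) ^ k) p" for k p
  proof -
    have "(- 1 :: int poly) ^ k = [:(- 1) ^ k:]" by (induction k) (simp_all add: one_pCons)
    then show ?thesis by simp
  qed
  have "derangement_poly_on {1..n} = (\<Sum>T\<in>Pow {1..n}. (- 1) ^ (card {1..n} - card T) * eulerian_poly_on T)"
    by (rule inclusion_exclusion_mobius) (simp_all add: eulerian_poly_on_eq_sum_derangement_poly_on)
  also have "\<dots> = local_h {1..n} barycentric_sd"
    unfolding local_h_def
    by (intro sum.cong refl) (simp add: sign eulerian_poly_on_eq_bary_h_poly bary_h_poly_def
        finite_subset[OF _ finite_atLeastAtMost])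
  also have "derangement_poly_on {1..n} = derangement_poly n"
    unfolding derangement_poly_on_def derangement_poly_def derangements_def exc_def exc_on_def ..
  finally show ?thesis by simp
qed

section \<open>Derangements refined by their last value\<close>

definition shift :: "nat \<Rightarrow> nat \<Rightarrow> nat" where
  "shift v i = (if i < v then i else Suc i)"

definition unshift :: "nat \<Rightarrow> nat \<Rightarrow> nat" where
  "unshift v i = (if i < v then i else i - 1)"

lemma shift_inj [simp]: "shift v a = shift v b \<longleftrightarrow> a = b"
  by (auto simp: shift_def)

lemma shift_ne [simp]: "shift v a \<noteq> v"
  by (auto simp: shift_def)

lemma unshift_shift [simp]: "unshift v (shift v a) = a"
  by (auto simp: shift_def unshift_def)

lemma shift_unshift: "a \<noteq> v \<Longrightarrow> shift v (unshift v a) = a"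
  by (auto simp: shift_def unshift_def)

lemma shift_less [simp]: "shift v a < shift v b \<longleftrightarrow> a < b"
  by (auto simp: shift_def)

lemma shift_gt_iff: "v < shift v a \<longleftrightarrow> v \<le> a"
  by (auto simp: shift_def)

definition near_derangements :: "nat \<Rightarrow> (nat \<Rightarrow> nat) set" where
  "near_derangements n = {t. t permutes {1..n} \<and> (\<forall>i\<in>{1..<n}. t i \<noteq> i)}"

text \<open>For \<open>s (n+1) = v\<close>, \<open>remove_last n v s\<close> deletes \<open>v\<close> from its cycle in \<open>s\<close> and renames
  \<open>{1..n+1} - {v}\<close> order-preservingly to \<open>{1..n}\<close>; thus \<open>n+1\<close> becomes \<open>n\<close>, the only
  point that may become fixed. \<open>insert_last\<close> is the inverse operation.\<close>
definition insert_last :: "nat \<Rightarrow> nat \<Rightarrow> (nat \<Rightarrow> nat) \<Rightarrow> nat \<Rightarrow> nat" where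
  "insert_last n v t i = (if i = Suc n then v else if i = v then shift v (t n)
       else if i \<in> {1..n} then shift v (t (unshift v i)) else i)"

definition remove_last :: "nat \<Rightarrow> nat \<Rightarrow> (nat \<Rightarrow> nat) \<Rightarrow> nat \<Rightarrow> nat" where
  "remove_last n v s j = (if j = n then unshift v (s v) else if j \<in> {1..<n} then unshift v (s (shift v j)) else j)"

locale last_value =
  fixes n v :: nat
  assumes v: "1 \<le> v" "v \<le> n"
begin

lemma unshift_mem_lessThan_range: "i \<in> {1..n} \<Longrightarrow> i \<noteq> v \<Longrightarrow> unshift v i \<in> {1..<n}"
  using v by (auto simp: unshift_def)

lemma shift_mem_range: "j \<in> {1..<n} \<Longrightarrow> shift v j \<in> {1..n} \<and> shift v j \<noteq> v"
  using v by (auto simp: shift_def)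

lemma shift_mem_Suc_range: "j \<in> {1..n} \<Longrightarrow> shift v j \<in> {1..Suc n}"
  using v by (auto simp: shift_def)

lemma unshift_mem_Suc_range: "a \<in> {1..Suc n} \<Longrightarrow> a \<noteq> v \<Longrightarrow> unshift v a \<in> {1..n}"
  using v by (auto simp: unshift_def)

lemma insert_last_permutes:
  assumes tp: "t permutes {1..n}"
  shows "insert_last n v t permutes {1..Suc n}"
proof (rule inj_imp_permutes)
  have tin: "\<And>i. i \<in> {1..n} \<Longrightarrow> t i \<in> {1..n}" using permutes_in_image[OF tp] by blast
  have tinj: "\<And>i j. i \<in> {1..n} \<Longrightarrow> j \<in> {1..n} \<Longrightarrow> t i = t j \<longleftrightarrow> i = j"
    using tp by (metis permutes_inj_on inj_on_eq_iff)
  have n1: "n \<in> {1..n}" using v by auto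
  let ?s = "insert_last n v t"
  show "?s i \<in> {1..Suc n}" if iS: "i \<in> {1..Suc n}" for i
  proof -
    consider "i = Suc n" | "i = v" | "i \<in> {1..n}" "i \<noteq> v" using iS by fastforce
    then show ?thesis
    proof cases
      case 1 then show ?thesis using v by (simp add: insert_last_def)
    next
      case 2 then show ?thesis using v tin[OF n1] shift_mem_Suc_range by (simp add: insert_last_def)
    next
      case 3
      then have "unshift v i \<in> {1..n}" using unshift_mem_lessThan_range[of i] by auto
      then show ?thesis using 3 tin shift_mem_Suc_range by (simp add: insert_last_def)
    qed
  qed
  have vals: "?s (Suc n) = v" "?s v = shift v (t n)"
    "\<And>i. i \<in> {1..n} \<Longrightarrow> i \<noteq> v \<Longrightarrow> ?s i = shift v (t (unshift v i))"
    using v by (auto simp: insert_last_def)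
  show "inj_on ?s {1..Suc n}"
  proof (rule inj_onI)
    fix i j assume i: "i \<in> {1..Suc n}" and j: "j \<in> {1..Suc n}" and eq: "?s i = ?s j"
    have cases_i: "i = Suc n \<or> i = v \<or> (i \<in> {1..n} \<and> i \<noteq> v)" using i by fastforce
    have cases_j: "j = Suc n \<or> j = v \<or> (j \<in> {1..n} \<and> j \<noteq> v)" using j by fastforce
    have un: "\<And>i. i \<in> {1..n} \<Longrightarrow> i \<noteq> v \<Longrightarrow> unshift v i \<noteq> n \<and> unshift v i \<in> {1..n}"
      using unshift_mem_lessThan_range by fastforce
    show "i = j"
      using cases_i cases_j eq vals un tinj n1
      by (smt (verit) shift_inj shift_ne shift_unshift)
  qed
  show "\<And>i. i \<notin> {1..Suc n} \<Longrightarrow> ?s i = i" using v by (auto simp: insert_last_def)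
qed simp

lemma insert_last_mem:
  assumes t: "t \<in> near_derangements n"
  shows "insert_last n v t \<in> {s \<in> derangements (Suc n). s (Suc n) = v}"
proof -
  have tp: "t permutes {1..n}" and tf: "\<forall>i\<in>{1..<n}. t i \<noteq> i"
    using t by (auto simp: near_derangements_def)
  let ?s = "insert_last n v t"
  have "?s i \<noteq> i" if i: "i \<in> {1..Suc n}" for i
  proof -
    consider "i = Suc n" | "i = v" | "i \<in> {1..n}" "i \<noteq> v" using i by fastforce
    then show ?thesis
    proof cases
      case 3
      then have "unshift v i \<in> {1..<n}" using unshift_mem_lessThan_range by simp
      then have "shift v (t (unshift v i)) \<noteq> shift v (unshift v i)" using tf by simp
      then show ?thesis using 3 shift_unshift[of i v] by (simp add: insert_last_def)
    qed (use v in \<open>simp_all add: insert_last_def\<close>)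
  qed
  then show ?thesis
    using insert_last_permutes[OF tp] by (simp add: derangements_def insert_last_def)
qed

lemma remove_last_outside: "j \<noteq> n \<Longrightarrow> j \<notin> {1..<n} \<Longrightarrow> remove_last n v s j = j"
  by (auto simp: remove_last_def)

lemma insert_last_outside: "i \<noteq> Suc n \<Longrightarrow> i \<noteq> v \<Longrightarrow> i \<notin> {1..n} \<Longrightarrow> insert_last n v t i = i"
  by (auto simp: insert_last_def)

lemma insert_last_at_v: "insert_last n v t v = shift v (t n)" using v by (simp add: insert_last_def)

lemma unshift_inj: "a \<noteq> v \<Longrightarrow> b \<noteq> v \<Longrightarrow> unshift v a = unshift v b \<longleftrightarrow> a = b"
  by (metis shift_unshift)

lemma remove_last_permutes:
  assumes sp: "s permutes {1..Suc n}" and sv: "s (Suc n) = v" and svv: "s v \<noteq> v"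
  shows "remove_last n v s permutes {1..n}"
proof (rule inj_imp_permutes)
  have sin: "\<And>i. i \<in> {1..Suc n} \<Longrightarrow> s i \<in> {1..Suc n}" using permutes_in_image[OF sp] by blast
  have sinj: "\<And>i j. i \<in> {1..Suc n} \<Longrightarrow> j \<in> {1..Suc n} \<Longrightarrow> s i = s j \<longleftrightarrow> i = j"
    using sp by (metis permutes_inj_on inj_on_eq_iff)
  have vr: "v \<in> {1..Suc n}" using v by auto
  let ?t = "remove_last n v s"
  have d1: "?t n = unshift v (s v)" by (simp add: remove_last_def)
  have d2: "\<And>j. j \<in> {1..<n} \<Longrightarrow> ?t j = unshift v (s (shift v j))" by (auto simp: remove_last_def)
  have svr: "s v \<in> {1..Suc n}" using sin vr by blast
  have shr: "\<And>j. j \<in> {1..<n} \<Longrightarrow> shift v j \<in> {1..Suc n} \<and> shift v j \<noteq> Suc n \<and> shift v j \<noteq> v"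
    using shift_mem_range by fastforce
  have sv': "\<And>a. a \<in> {1..Suc n} \<Longrightarrow> s a = v \<longleftrightarrow> a = Suc n"
    using sinj[of _ "Suc n"] sv by auto
  have sshv: "\<And>j. j \<in> {1..<n} \<Longrightarrow> s (shift v j) \<noteq> v \<and> s (shift v j) \<in> {1..Suc n}"
    using shr sv' sin by blast
  show "?t j \<in> {1..n}" if j: "j \<in> {1..n}" for j
  proof (cases "j = n")
    case True then show ?thesis using d1 unshift_mem_Suc_range svr svv by simp
  next
    case False
    then have "j \<in> {1..<n}" using j by auto
    then show ?thesis using d2 unshift_mem_Suc_range sshv by simp
  qed
  show "inj_on ?t {1..n}"
  proof (rule inj_onI)
    fix i j assume i: "i \<in> {1..n}" and j: "j \<in> {1..n}" and eq: "?t i = ?t j"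
    have ci: "i = n \<or> i \<in> {1..<n}" using i by auto
    have cj: "j = n \<or> j \<in> {1..<n}" using j by auto
    show "i = j"
      using ci cj eq d1 d2 unshift_inj sshv svv svr shr sinj vr
      by (smt (verit) shift_inj)
  qed
  show "\<And>j. j \<notin> {1..n} \<Longrightarrow> ?t j = j" using v by (auto simp: remove_last_def)
qed simp

lemma remove_last_mem:
  assumes s: "s \<in> {s \<in> derangements (Suc n). s (Suc n) = v}"
  shows "remove_last n v s \<in> near_derangements n"
proof -
  have sp: "s permutes {1..Suc n}" and sf: "\<forall>i\<in>{1..Suc n}. s i \<noteq> i" and sv: "s (Suc n) = v"
    using s by (auto simp: derangements_def)
  have svv: "s v \<noteq> v" using sf v by auto
  have "remove_last n v s j \<noteq> j" if j: "j \<in> {1..<n}" for j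
  proof
    have shr: "shift v j \<in> {1..Suc n}" "shift v j \<noteq> Suc n" using shift_mem_range[OF j] by auto
    then have "s (shift v j) \<noteq> v"
      using sv permutes_inj_on[OF sp] by (metis atLeastAtMost_iff inj_on_eq_iff le_SucI order_refl v(1) Suc_le_mono)
    moreover assume "remove_last n v s j = j"
    then have "shift v (unshift v (s (shift v j))) = shift v j" using j by (simp add: remove_last_def)
    ultimately have "s (shift v j) = shift v j" using shift_unshift by simp
    then show False using sf shr by blast
  qed
  then show ?thesis
    using remove_last_permutes[OF sp sv svv] by (simp add: near_derangements_def)
qed

lemma remove_insert_last:
  assumes t: "t \<in> near_derangements n"
  shows "remove_last n v (insert_last n v t) = t"
proof
  fix j
  have tp: "t permutes {1..n}" using t by (simp add: near_derangements_def)
  show "remove_last n v (insert_last n v t) j = t j"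
  proof (cases "j = n")
    case True then show ?thesis using v by (simp add: remove_last_def insert_last_def)
  next
    case False
    show ?thesis
    proof (cases "j \<in> {1..<n}")
      case True
      then have "shift v j \<in> {1..n}" "shift v j \<noteq> v" using shift_mem_range by auto
      then have "insert_last n v t (shift v j) = shift v (t j)" by (auto simp: insert_last_def)
      then show ?thesis using True False by (simp add: remove_last_def)
    next
      case F2: False
      then have "j \<notin> {1..n}" using False by auto
      then show ?thesis using remove_last_outside[OF False F2] permutes_not_in[OF tp] by simp
    qed
  qed
qed

lemma insert_remove_last:
  assumes s: "s \<in> {s \<in> derangements (Suc n). s (Suc n) = v}"
  shows "insert_last n v (remove_last n v s) = s"
proof
  fix i
  have sp: "s permutes {1..Suc n}" and sf: "\<forall>i\<in>{1..Suc n}. s i \<noteq> i" and sv: "s (Suc n) = v"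
    using s by (auto simp: derangements_def)
  have sinj: "\<And>i j. i \<in> {1..Suc n} \<Longrightarrow> j \<in> {1..Suc n} \<Longrightarrow> s i = s j \<longleftrightarrow> i = j"
    using sp by (metis permutes_inj_on inj_on_eq_iff)
  have vr: "v \<in> {1..Suc n}" using v by auto
  have svv: "s v \<noteq> v" using sf vr by blast
  show "insert_last n v (remove_last n v s) i = s i"
  proof (cases "i = Suc n")
    case True then show ?thesis using sv by (simp add: insert_last_def)
  next
    case F1: False
    show ?thesis
    proof (cases "i = v")
      case True
      then show ?thesis using F1 svv shift_unshift by (simp add: insert_last_def remove_last_def)
    next
      case F2: False
      show ?thesis
      proof (cases "i \<in> {1..n}")
        case True
        then have u: "unshift v i \<in> {1..<n}" using unshift_mem_lessThan_range F2 by simp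
        then have un: "unshift v i \<noteq> n" by simp
        have "s i \<noteq> v" using sinj[of i "Suc n"] sv True F1 by auto
        then show ?thesis using True F1 F2 u un shift_unshift[OF F2] shift_unshift[of "s i"]
          by (simp add: insert_last_def remove_last_def)
      next
        case False
        then have "i \<notin> {1..Suc n}" using F1 by auto
        then show ?thesis using insert_last_outside[OF F1 F2 False] permutes_not_in[OF sp] by simp
      qed
    qed
  qed
qed

lemma excedances_insert_last:
  "{i\<in>{1..Suc n}. insert_last n v t i > i}
    = shift v ` {j\<in>{1..<n}. t j > j} \<union> (if v \<le> t n then {v} else {})"
  (is "?E = shift v ` ?A \<union> _")
proof (intro set_eqI iffI)
  fix i assume "i \<in> ?E"
  then have ir: "i \<in> {1..Suc n}" and gt: "insert_last n v t i > i" by auto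
  have "i = Suc n \<or> i = v \<or> (i \<in> {1..n} \<and> i \<noteq> v)" using ir by fastforce
  then show "i \<in> shift v ` ?A \<union> (if v \<le> t n then {v} else {})"
  proof (elim disjE conjE)
    assume "i = Suc n" then show ?thesis using gt v by (simp add: insert_last_def)
  next
    assume "i = v" then show ?thesis using gt by (simp add: insert_last_at_v shift_gt_iff)
  next
    assume a: "i \<in> {1..n}" "i \<noteq> v"
    then have u: "unshift v i \<in> {1..<n}" using unshift_mem_lessThan_range by simp
    have "shift v (t (unshift v i)) > shift v (unshift v i)"
      using gt a shift_unshift[OF a(2)] by (auto simp: insert_last_def)
    then have "unshift v i \<in> ?A" using u by simp
    then show ?thesis using shift_unshift[OF a(2)] by (metis UnI1 image_eqI)
  qed
next
  fix i assume i: "i \<in> shift v ` ?A \<union> (if v \<le> t n then {v} else {})"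
  show "i \<in> ?E"
  proof (cases "i \<in> shift v ` ?A")
    case True
    then obtain j where j: "j \<in> {1..<n}" "t j > j" "i = shift v j" by auto
    then have "i \<in> {1..n}" "i \<noteq> v" using shift_mem_range by auto
    moreover have "insert_last n v t i = shift v (t j)" using j calculation by (auto simp: insert_last_def)
    ultimately show ?thesis using j by auto
  next
    case False
    then have "i = v" "v \<le> t n" using i by (auto split: if_splits)
    then show ?thesis using v by (simp add: insert_last_at_v shift_gt_iff)
  qed
qed

lemma exc_insert_last:
  assumes tp: "t permutes {1..n}"
  shows "exc (Suc n) (insert_last n v t) = exc n t + (if v \<le> t n then 1 else 0)"
proof -
  define A where "A = {j\<in>{1..<n}. t j > j}"
  have "\<not> t n > n" using permutes_in_image[OF tp, of n] v by auto
  then have "{i\<in>{1..n}. t i > i} = A" by (auto simp: A_def nat_less_le)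
  moreover have "v \<notin> shift v ` A" using shift_ne by (metis imageE)
  moreover have "card (shift v ` A) = card A" by (rule card_image) (simp add: inj_on_def)
  ultimately show ?thesis
    unfolding exc_def excedances_insert_last A_def[symmetric] by (simp add: A_def)
qed

lemma bij_betw_insert_last: "bij_betw (insert_last n v) (near_derangements n) {s \<in> derangements (Suc n). s (Suc n) = v}"
  by (rule bij_betw_byWitness[where f' = "remove_last n v"]) (use remove_insert_last insert_remove_last insert_last_mem remove_last_mem in auto)

end

definition derangement_poly_last :: "nat \<Rightarrow> nat \<Rightarrow> int poly" where
  "derangement_poly_last n u = (\<Sum>s\<in>{s \<in> derangements n. s n = u}. monom 1 (exc n s))"

definition zvar :: "int poly" where
  "zvar = monom 1 1"

lemma monom_Suc_eq_zvar: "monom (1::int) (Suc e) = zvar * monom 1 e"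
  by (simp add: mult_monom zvar_def)

lemma finite_derangements: "finite (derangements n)"
  by (rule finite_subset[OF _ finite_permutations[of "{1..n}"]]) (auto simp: derangements_def)

lemma finite_near_derangements: "finite (near_derangements n)"
  by (rule finite_subset[OF _ finite_permutations[of "{1..n}"]]) (auto simp: near_derangements_def)

lemma sum_derangements_group_last:
  assumes "1 \<le> n"
  shows "(\<Sum>s\<in>derangements n. f s) = (\<Sum>u\<in>{1..n}. \<Sum>s\<in>{s \<in> derangements n. s n = u}. f s)"
proof (rule sum.group[symmetric])
  show "(\<lambda>s. s n) ` derangements n \<subseteq> {1..n}"
    using assms permutes_in_image[of _ "{1..n}" n] by (auto simp: derangements_def)
qed (simp_all add: finite_derangements)

lemma derangement_poly_last_self:
  assumes "1 \<le> n"
  shows "derangement_poly_last n n = 0"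
proof -
  have "{s \<in> derangements n. s n = n} = {}" using assms by (auto simp: derangements_def)
  then show ?thesis unfolding derangement_poly_last_def by (simp only: sum.empty)
qed

lemma derangement_poly_Suc_eq_sum_last:
  "derangement_poly (Suc m) = (\<Sum>u\<in>{1..m}. derangement_poly_last (Suc m) u)"
proof -
  have "derangement_poly (Suc m) = (\<Sum>u\<in>{1..Suc m}. derangement_poly_last (Suc m) u)"
    unfolding derangement_poly_def derangement_poly_last_def by (rule sum_derangements_group_last) simp
  then show ?thesis using derangement_poly_last_self[of "Suc m"] by simp
qed

lemma derangement_poly_0: "derangement_poly 0 = 1"
proof -
  have "derangements 0 = {id}" by (auto simp: derangements_def)
  then show ?thesis by (simp add: derangement_poly_def exc_def)
qed

lemma near_derangements_moved: "1 \<le> n \<Longrightarrow> {t \<in> near_derangements n. t n \<noteq> n} = derangements n"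
  by (auto simp: near_derangements_def derangements_def)

lemma near_derangements_fixed:
  assumes "1 \<le> n"
  shows "{t \<in> near_derangements n. t n = n} = derangements (n - 1)"
proof (intro set_eqI iffI)
  fix t assume "t \<in> {t \<in> near_derangements n. t n = n}"
  then have tp: "t permutes {1..n}" and tf: "\<forall>i\<in>{1..<n}. t i \<noteq> i" and tn: "t n = n"
    by (auto simp: near_derangements_def)
  have "t permutes {1..n-1}"
  proof (rule permutes_superset[OF tp])
    fix x assume "x \<in> {1..n} - {1..n-1}"
    then show "t x = x" using tn by (cases "x = n") auto
  qed
  moreover have "\<forall>i\<in>{1..n-1}. t i \<noteq> i" using tf assms by auto
  ultimately show "t \<in> derangements (n - 1)" by (simp add: derangements_def)
next
  fix t assume "t \<in> derangements (n - 1)"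
  then have tp: "t permutes {1..n-1}" and tf: "\<forall>i\<in>{1..n-1}. t i \<noteq> i"
    by (auto simp: derangements_def)
  have "t permutes {1..n}" by (rule permutes_subset[OF tp]) auto
  moreover have "t n = n" using permutes_not_in[OF tp, of n] assms by auto
  moreover have "\<forall>i\<in>{1..<n}. t i \<noteq> i" using tf assms by auto
  ultimately show "t \<in> {t \<in> near_derangements n. t n = n}" by (simp add: near_derangements_def)
qed

lemma exc_eq_exc_pred:
  assumes "1 \<le> n" "t permutes {1..n-1}"
  shows "exc n t = exc (n - 1) t"
proof -
  have "t n = n" using permutes_not_in[OF assms(2), of n] assms(1) by auto
  moreover have "{1..n} = insert n {1..n-1}" using assms(1) by auto
  ultimately have "{i\<in>{1..n}. t i > i} = {i\<in>{1..n-1}. t i > i}" by auto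
  then show ?thesis by (simp add: exc_def)
qed

lemma derangement_poly_last_Suc:
  assumes v: "1 \<le> v" "v \<le> n"
  shows "derangement_poly_last (Suc n) v = zvar * derangement_poly (n - 1)
    + (\<Sum>u\<in>{1..n}. if v \<le> u then zvar * derangement_poly_last n u else derangement_poly_last n u)"
proof -
  interpret last_value n v using v by unfold_locales
  have n1: "1 \<le> n" using v by simp
  let ?g = "\<lambda>t. monom (1::int) (exc n t + (if v \<le> t n then 1 else 0))"
  have fixed: "(\<Sum>t\<in>{t \<in> near_derangements n. t n = n}. ?g t) = zvar * derangement_poly (n - 1)"
  proof -
    have "?g t = zvar * monom 1 (exc (n - 1) t)" if "t \<in> derangements (n - 1)" for t
    proof -
      have tp: "t permutes {1..n-1}" using that by (simp add: derangements_def)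
      then have "t n = n" using permutes_not_in[OF tp, of n] n1 by auto
      then show ?thesis using v exc_eq_exc_pred[OF n1 tp] by (simp add: monom_Suc_eq_zvar)
    qed
    then show ?thesis
      by (simp add: near_derangements_fixed[OF n1] derangement_poly_def sum_distrib_left)
  qed
  have moved: "(\<Sum>t\<in>{t \<in> near_derangements n. t n \<noteq> n}. ?g t)
      = (\<Sum>u\<in>{1..n}. if v \<le> u then zvar * derangement_poly_last n u else derangement_poly_last n u)"
    unfolding near_derangements_moved[OF n1] sum_derangements_group_last[OF n1]
    by (auto simp: derangement_poly_last_def sum_distrib_left monom_Suc_eq_zvar intro!: sum.cong)
  have "derangement_poly_last (Suc n) v
      = (\<Sum>t\<in>near_derangements n. monom 1 (exc (Suc n) (insert_last n v t)))"
    unfolding derangement_poly_last_def by (rule sum.reindex_bij_betw[OF bij_betw_insert_last, symmetric])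
  also have "\<dots> = (\<Sum>t\<in>near_derangements n. ?g t)"
    by (rule sum.cong[OF refl]) (simp add: exc_insert_last near_derangements_def)
  also have "\<dots> = (\<Sum>t\<in>{t \<in> near_derangements n. t n \<noteq> n}. ?g t)
      + (\<Sum>t\<in>{t \<in> near_derangements n. t n = n}. ?g t)"
  proof -
    have "near_derangements n
        = {t \<in> near_derangements n. t n \<noteq> n} \<union> {t \<in> near_derangements n. t n = n}" by auto
    then show ?thesis
      using finite_near_derangements[of n] by (subst sum.union_disjoint[symmetric]) auto
  qed
  finally show ?thesis using fixed moved by (simp add: add.commute)
qed

section \<open>Lecture hall sequences\<close>

text \<open>\<open>lh_step j b a\<close> says that \<open>a / (j + 2) - b / (j + 1) \<in> (0, 1)\<close>: for \<open>s = (2, 3, \<dots>)\<close> this is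
  the condition on consecutive coordinates \<open>b = x\<^sub>j\<^sub>-\<^sub>1\<close>, \<open>a = x\<^sub>j\<close> of a lattice point in the open
  parallelepiped of the lecture hall simplex.\<close>
definition lh_step :: "nat \<Rightarrow> int \<Rightarrow> int \<Rightarrow> bool" where
  "lh_step j b a \<longleftrightarrow> (int j + 2) * b < (int j + 1) * a
    \<and> (int j + 1) * a < (int j + 2) * b + (int j + 1) * (int j + 2)"

definition last_or_0 :: "int list \<Rightarrow> int" where
  "last_or_0 xs = (if xs = [] then 0 else last xs)"

fun lh_seqs :: "nat \<Rightarrow> int list set" where
  "lh_seqs 0 = {[]}"
| "lh_seqs (Suc L) = (\<lambda>(xs, a). xs @ [a]) ` (SIGMA xs:lh_seqs L. {a. lh_step L (last_or_0 xs) a})"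

lemma last_or_0_snoc [simp]: "last_or_0 (xs @ [a]) = a"
  by (simp add: last_or_0_def)

lemma lh_step_bounds:
  assumes b: "0 \<le> b" "b \<le> int L * (int L + 1)" and step: "lh_step L b a"
  shows "0 < a \<and> a \<le> (int L + 1) * (int L + 2)"
proof -
  have lo: "(int L + 2) * b < (int L + 1) * a"
    and hi: "(int L + 1) * a < (int L + 2) * b + (int L + 1) * (int L + 2)"
    using step by (auto simp: lh_step_def)
  have "(int L + 2) * b \<ge> 0" using b by simp
  then have "(int L + 1) * a > 0" using lo by linarith
  then have "a > 0" by (simp add: zero_less_mult_iff)
  moreover have "(int L + 2) * b \<le> (int L + 2) * (int L * (int L + 1))" using b by (intro mult_left_mono) auto
  then have "(int L + 1) * a < (int L + 1) * ((int L + 1) * (int L + 2))"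
    using hi by (simp add: algebra_simps)
  then have "a < (int L + 1) * (int L + 2)" by (simp add: mult_less_cancel_left_pos)
  ultimately show ?thesis by simp
qed

lemma lh_seqs_props:
  "xs \<in> lh_seqs L \<Longrightarrow> length xs = L \<and> 0 \<le> last_or_0 xs \<and> last_or_0 xs \<le> int L * (int L + 1)"
proof (induction L arbitrary: xs)
  case (Suc L)
  then obtain ys a where ys: "ys \<in> lh_seqs L" "lh_step L (last_or_0 ys) a" "xs = ys @ [a]" by auto
  have "0 < a \<and> a \<le> (int L + 1) * (int L + 2)" using lh_step_bounds Suc.IH[OF ys(1)] ys(2) by blast
  then show ?case using Suc.IH[OF ys(1)] ys(3) by (simp add: algebra_simps)
qed (simp add: last_or_0_def)

lemma finite_lh_step:
  assumes "0 \<le> b" "b \<le> int L * (int L + 1)"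
  shows "finite {a. lh_step L b a}"
proof -
  have "{a. lh_step L b a} \<subseteq> {0..(int L + 1) * (int L + 2)}" using lh_step_bounds[OF assms] by fastforce
  then show ?thesis by (rule finite_subset) simp
qed

lemma finite_lh_seqs: "finite (lh_seqs L)"
proof (induction L)
  case (Suc L)
  have "finite (SIGMA xs:lh_seqs L. {a. lh_step L (last_or_0 xs) a})"
    using Suc finite_lh_step lh_seqs_props by (intro finite_SigmaI) auto
  then show ?case by simp
qed simp

lemma mult_window_iff:
  fixes d m t :: int
  assumes "0 < m" "- m < d" "d < m"
  shows "d < t * m \<and> (t - 1) * m < d \<longleftrightarrow> (t = 0 \<and> d < 0) \<or> (t = 1 \<and> 0 < d)"
proof -
  consider "t \<le> -1" | "t = 0" | "t = 1" | "t \<ge> 2" by linarith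
  then show ?thesis
  proof cases
    case 1
    then have "t * m \<le> -1 * m" using assms(1) by (intro mult_right_mono) auto
    then show ?thesis using assms 1 by auto
  next
    case 4
    then have "1 * m \<le> (t - 1) * m" using assms(1) by (intro mult_right_mono) auto
    then have "\<not> (t - 1) * m < d" using assms by linarith
    then show ?thesis using 4 by auto
  qed (use assms in auto)
qed

lemma residue_combination_props:
  fixes K e e' :: int
  assumes K: "1 \<le> K" and e': "0 \<le> e'" "e' < K" and e: "0 \<le> e" "e \<le> K"
  defines "d \<equiv> e' * (K + 1) - K * e"
  shows "- (K * (K + 1)) < d" "d < K * (K + 1)" "d < 0 \<longleftrightarrow> e' < e" "0 < d \<longleftrightarrow> e \<le> e' \<and> 1 \<le> e'"
proof -
  have d: "d = K * (e' - e) + e'" by (simp add: d_def algebra_simps)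
  have "K * e \<le> K * K" using e K by (intro mult_left_mono) auto
  moreover have "0 \<le> e' * (K + 1)" using e' K by simp
  ultimately have "- (K * K) \<le> d" unfolding d_def by linarith
  then show "- (K * (K + 1)) < d" using K by (simp add: algebra_simps)
  have "e' * (K + 1) \<le> (K - 1) * (K + 1)" using e' K by (intro mult_right_mono) auto
  moreover have "0 \<le> K * e" using e K by simp
  moreover have "(K - 1) * (K + 1) = K * K - 1" by (simp add: algebra_simps)
  ultimately have "d \<le> K * K - 1" unfolding d_def by linarith
  then show "d < K * (K + 1)" using K by (simp add: algebra_simps)
  have "(e' < e \<and> d < 0) \<or> (e \<le> e' \<and> e' \<le> d \<and> (e' = 0 \<longrightarrow> d = 0))"
  proof (cases "e' < e")
    case True
    then have "K * (e' - e) \<le> - K" using mult_left_mono[of "e' - e" "-1" K] K by simp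
    then show ?thesis using True e' d by auto
  next
    case False
    then have "0 \<le> K * (e' - e)" using K by simp
    then show ?thesis using False e d by auto
  qed
  then show "d < 0 \<longleftrightarrow> e' < e" "0 < d \<longleftrightarrow> e \<le> e' \<and> 1 \<le> e'" using e' by auto
qed

lemma lh_step_div_mod_iff:
  fixes p q e e' :: int and L :: nat
  defines "K \<equiv> int L + 1"
  assumes e': "0 \<le> e'" "e' \<le> int L" and e: "0 \<le> e" "e \<le> int L + 1"
  shows "lh_step L (p * K + e') (q * (K + 1) + e)
    \<longleftrightarrow> (q = p \<and> e' < e) \<or> (q = p + 1 \<and> e \<le> e' \<and> 1 \<le> e')"
proof -
  define d where "d = e' * (K + 1) - K * e"
  have K: "1 \<le> K" by (simp add: K_def)
  have "lh_step L (p * K + e') (q * (K + 1) + e)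
      \<longleftrightarrow> d < (q - p) * (K * (K + 1)) \<and> (q - p - 1) * (K * (K + 1)) < d"
    unfolding lh_step_def d_def K_def by (simp add: algebra_simps)
  also have "\<dots> \<longleftrightarrow> (q - p = 0 \<and> d < 0) \<or> (q - p = 1 \<and> 0 < d)"
    using residue_combination_props[OF K _ _ _ _, of e' e] e e' K
    by (intro mult_window_iff) (simp_all add: d_def K_def)
  also have "\<dots> \<longleftrightarrow> (q = p \<and> e' < e) \<or> (q = p + 1 \<and> e \<le> e' \<and> 1 \<le> e')"
    using residue_combination_props[OF K _ _ _ _, of e' e] e e' by (auto simp: d_def K_def)
  finally show ?thesis .
qed

definition residue_monom :: "int \<Rightarrow> int \<Rightarrow> int \<Rightarrow> int poly" where
  "residue_monom K e a = (if a mod K = e then monom 1 (nat (a div K)) else 0)"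

definition lh_weight :: "nat \<Rightarrow> int \<Rightarrow> int poly" where
  "lh_weight L e = (\<Sum>xs\<in>lh_seqs L. residue_monom (int L + 1) e (last_or_0 xs))"

definition transfer :: "int \<Rightarrow> int \<Rightarrow> int poly" where
  "transfer e e' = (if e' < e then 1 else 0) + (if e \<le> e' \<and> 1 \<le> e' then zvar else 0)"

lemma lh_step_residue_eq:
  fixes L :: nat and b e :: int
  defines "K \<equiv> int L + 1"
  assumes e: "0 \<le> e" "e \<le> int L + 1"
  defines "p \<equiv> b div K" and "e' \<equiv> b mod K"
  shows "{a. lh_step L b a \<and> a mod (K + 1) = e} =
    (if e' < e then {p * (K + 1) + e} else {}) \<union> (if e \<le> e' \<and> 1 \<le> e' then {(p + 1) * (K + 1) + e} else {})"
proof -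
  have bpe: "b = p * K + e'" by (simp add: p_def e'_def)
  have e': "0 \<le> e'" "e' \<le> int L" using pos_mod_bound[of K b] by (simp_all add: e'_def K_def)
  have step: "lh_step L b (q * (K + 1) + e) \<longleftrightarrow> (q = p \<and> e' < e) \<or> (q = p + 1 \<and> e \<le> e' \<and> 1 \<le> e')"
    for q using lh_step_div_mod_iff[OF e' e, of p q] by (simp add: bpe K_def)
  have mem: "a \<in> {a. lh_step L b a \<and> a mod (K + 1) = e}
      \<longleftrightarrow> (\<exists>q. lh_step L b (q * (K + 1) + e) \<and> a = q * (K + 1) + e)" for a
  proof
    assume "a \<in> {a. lh_step L b a \<and> a mod (K + 1) = e}"
    then have step_a: "lh_step L b a" and "a mod (K + 1) = e" by auto
    then have a: "a = a div (K + 1) * (K + 1) + e" using div_mult_mod_eq[of a "K + 1"] by simp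
    show "\<exists>q. lh_step L b (q * (K + 1) + e) \<and> a = q * (K + 1) + e"
    proof (intro exI conjI)
      show "a = a div (K + 1) * (K + 1) + e" by (fact a)
      show "lh_step L b (a div (K + 1) * (K + 1) + e)" using step_a by (simp only: a[symmetric])
    qed
  next
    assume "\<exists>q. lh_step L b (q * (K + 1) + e) \<and> a = q * (K + 1) + e"
    moreover have "(q * (K + 1) + e) mod (K + 1) = e" for q using e by (simp add: K_def)
    ultimately show "a \<in> {a. lh_step L b a \<and> a mod (K + 1) = e}" by auto
  qed
  show ?thesis unfolding set_eq_iff mem step by auto
qed

lemma sum_lh_step_residue:
  fixes L :: nat and b e :: int
  defines "K \<equiv> int L + 1"
  assumes b: "0 \<le> b" "b \<le> int L * (int L + 1)" and e: "0 \<le> e" "e \<le> int L + 1"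
  shows "(\<Sum>a\<in>{a. lh_step L b a}. residue_monom (K + 1) e a) = transfer e (b mod K) * monom 1 (nat (b div K))"
proof -
  define p where "p = b div K"
  define e' where "e' = b mod K"
  have p0: "p \<ge> 0" using b by (simp add: p_def K_def pos_imp_zdiv_nonneg_iff)
  have filter: "{a \<in> {a. lh_step L b a}. a mod (K + 1) = e} = {a. lh_step L b a \<and> a mod (K + 1) = e}"
    by simp
  have "(\<Sum>a\<in>{a. lh_step L b a}. residue_monom (K + 1) e a)
      = (\<Sum>a\<in>{a. lh_step L b a \<and> a mod (K + 1) = e}. monom 1 (nat (a div (K + 1))))"
    unfolding residue_monom_def filter[symmetric] by (rule sum.inter_filter[OF finite_lh_step[OF b], symmetric])
  also have "\<dots> = (if e' < e then monom 1 (nat p) else 0) + (if e \<le> e' \<and> 1 \<le> e' then monom 1 (nat (p + 1)) else 0)"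
  proof -
    have "(p * (K + 1) + e) div (K + 1) = p" "((p + 1) * (K + 1) + e) div (K + 1) = p + 1"
      using e by (simp_all add: K_def)
    moreover have "p * (K + 1) + e \<noteq> (p + 1) * (K + 1) + e" by (simp add: K_def algebra_simps)
    moreover have "{a. lh_step L b a \<and> a mod (K + 1) = e} = (if e' < e then {p * (K + 1) + e} else {})
        \<union> (if e \<le> e' \<and> 1 \<le> e' then {(p + 1) * (K + 1) + e} else {})"
      unfolding p_def e'_def K_def by (rule lh_step_residue_eq[OF e])
    ultimately show ?thesis by (auto simp: sum.union_disjoint)
  qed
  also have "monom (1::int) (nat (p + 1)) = zvar * monom 1 (nat p)"
    using p0 by (simp add: zvar_def mult_monom nat_add_distrib)
  finally show ?thesis by (simp add: transfer_def p_def e'_def distrib_right)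
qed

lemma lh_weight_Suc:
  assumes e: "0 \<le> e" "e \<le> int L + 1"
  shows "lh_weight (Suc L) e = (\<Sum>e'\<in>{0..int L}. transfer e e' * lh_weight L e')"
proof -
  define K where "K = int L + 1"
  define S where "S = (SIGMA xs:lh_seqs L. {a. lh_step L (last_or_0 xs) a})"
  have inj: "inj_on (\<lambda>(xs, a). xs @ [a]) S" by (auto simp: inj_on_def)
  have "lh_weight (Suc L) e = (\<Sum>(xs, a)\<in>S. residue_monom (K + 1) e a)"
    unfolding lh_weight_def lh_seqs.simps S_def[symmetric] sum.reindex[OF inj]
    by (simp add: K_def case_prod_unfold add.commute)
  also have "\<dots> = (\<Sum>xs\<in>lh_seqs L. transfer e (last_or_0 xs mod K) * monom 1 (nat (last_or_0 xs div K)))"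
    unfolding S_def using finite_lh_seqs finite_lh_step lh_seqs_props sum_lh_step_residue[OF _ _ e]
    by (subst sum.Sigma[symmetric]) (auto simp: K_def intro!: sum.cong)
  also have "\<dots> = (\<Sum>e'\<in>{0..int L}. \<Sum>xs\<in>{xs \<in> lh_seqs L. last_or_0 xs mod K = e'}.
      transfer e e' * monom 1 (nat (last_or_0 xs div K)))"
  proof -
    have "(\<lambda>xs. last_or_0 xs mod K) ` lh_seqs L \<subseteq> {0..int L}"
      using pos_mod_bound[of K] pos_mod_sign[of K] by (auto simp: K_def)
    then show ?thesis
      by (subst sum.group[symmetric, of _ _ "\<lambda>xs. last_or_0 xs mod K"])
        (auto simp: finite_lh_seqs intro!: sum.cong)
  qed
  also have "\<dots> = (\<Sum>e'\<in>{0..int L}. transfer e e' * lh_weight L e')"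
  proof (rule sum.cong[OF refl])
    fix e'
    have "(\<Sum>xs\<in>{xs \<in> lh_seqs L. last_or_0 xs mod K = e'}. monom 1 (nat (last_or_0 xs div K)))
        = lh_weight L e'"
      unfolding lh_weight_def residue_monom_def K_def by (rule sum.inter_filter[OF finite_lh_seqs])
    then show "(\<Sum>xs\<in>{xs \<in> lh_seqs L. last_or_0 xs mod K = e'}.
        transfer e e' * monom 1 (nat (last_or_0 xs div K))) = transfer e e' * lh_weight L e'"
      by (simp only: sum_distrib_left[symmetric])
  qed
  finally show ?thesis .
qed

lemma sum_int_atLeastAtMost_0: "(\<Sum>e\<in>{0..int m}. f e) = f 0 + (\<Sum>u\<in>{1..m}. f (int u))"
proof -
  have "{0..int m} = insert 0 {1..int m}" by auto
  then have "(\<Sum>e\<in>{0..int m}. f e) = f 0 + (\<Sum>e\<in>{1..int m}. f e)" by simp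
  also have "{1..int m} = int ` {1..m}" using image_int_atLeastAtMost[of 1 m] by simp
  finally show ?thesis by (simp add: sum.reindex)
qed

lemma lh_weight_Suc_0:
  assumes "\<forall>u\<in>{1..m}. zvar * lh_weight m (int u) = derangement_poly_last (Suc m) u"
  shows "lh_weight (Suc m) 0 = derangement_poly (Suc m)"
proof -
  have "lh_weight (Suc m) 0 = (\<Sum>e'\<in>{0..int m}. transfer 0 e' * lh_weight m e')"
    by (rule lh_weight_Suc) simp_all
  also have "\<dots> = (\<Sum>u\<in>{1..m}. zvar * lh_weight m (int u))"
    by (simp add: sum_int_atLeastAtMost_0 transfer_def)
  finally show ?thesis using assms by (simp add: derangement_poly_Suc_eq_sum_last)
qed

lemma zvar_lh_weight_Suc:
  assumes IH0: "lh_weight m 0 = derangement_poly m"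
    and IH: "\<forall>u\<in>{1..m}. zvar * lh_weight m (int u) = derangement_poly_last (Suc m) u"
    and v: "v \<in> {1..Suc m}"
  shows "zvar * lh_weight (Suc m) (int v) = derangement_poly_last (Suc (Suc m)) v"
proof -
  have "zvar * lh_weight (Suc m) (int v) = zvar * (\<Sum>e'\<in>{0..int m}. transfer (int v) e' * lh_weight m e')"
    using v by (subst lh_weight_Suc) simp_all
  also have "\<dots> = zvar * lh_weight m 0
      + (\<Sum>u\<in>{1..m}. transfer (int v) (int u) * (zvar * lh_weight m (int u)))"
    using v by (simp add: sum_int_atLeastAtMost_0 transfer_def distrib_left sum_distrib_left algebra_simps)
  also have "\<dots> = zvar * derangement_poly m + (\<Sum>u\<in>{1..m}.
      if v \<le> u then zvar * derangement_poly_last (Suc m) u else derangement_poly_last (Suc m) u)"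
    using IH0 IH by (auto simp: transfer_def intro!: sum.cong)
  also have "\<dots> = zvar * derangement_poly m + (\<Sum>u\<in>{1..Suc m}.
      if v \<le> u then zvar * derangement_poly_last (Suc m) u else derangement_poly_last (Suc m) u)"
    using derangement_poly_last_self[of "Suc m"] by simp
  also have "\<dots> = derangement_poly_last (Suc (Suc m)) v"
    using derangement_poly_last_Suc[of v "Suc m"] v by simp
  finally show ?thesis .
qed

lemma lh_weight_eq_derangement_poly:
  "lh_weight m 0 = derangement_poly m
    \<and> (\<forall>u\<in>{1..m}. zvar * lh_weight m (int u) = derangement_poly_last (Suc m) u)"
proof (induction m)
  case 0
  show ?case by (simp add: lh_weight_def residue_monom_def last_or_0_def derangement_poly_0)
next
  case (Suc m)
  then show ?case using lh_weight_Suc_0 zvar_lh_weight_Suc by blast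
qed

section \<open>Lattice points of the lecture hall parallelepiped\<close>

definition prev_or_0 :: "int list \<Rightarrow> nat \<Rightarrow> int" where
  "prev_or_0 xs j = (if j = 0 then 0 else xs ! (j - 1))"

lemma prev_or_0_snoc: "j \<le> length ys \<Longrightarrow> prev_or_0 (ys @ [a]) j = prev_or_0 ys j"
  by (auto simp: prev_or_0_def nth_append)

lemma prev_or_0_length: "prev_or_0 ys (length ys) = last_or_0 ys"
  by (cases ys rule: rev_cases) (auto simp: prev_or_0_def last_or_0_def nth_append)

lemma lh_steps_snoc:
  assumes "length ys = L"
  shows "(\<forall>j<Suc L. lh_step j (prev_or_0 (ys @ [a]) j) ((ys @ [a]) ! j))
    \<longleftrightarrow> (\<forall>j<L. lh_step j (prev_or_0 ys j) (ys ! j)) \<and> lh_step L (last_or_0 ys) a"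
  using assms prev_or_0_length[of ys] by (auto simp: All_less_Suc prev_or_0_snoc nth_append)

lemma mem_lh_seqs_iff:
  "xs \<in> lh_seqs L \<longleftrightarrow> length xs = L \<and> (\<forall>j<L. lh_step j (prev_or_0 xs j) (xs ! j))"
proof (induction L arbitrary: xs)
  case (Suc L)
  show ?case
  proof
    assume "xs \<in> lh_seqs (Suc L)"
    then obtain ys a where ys: "ys \<in> lh_seqs L" "lh_step L (last_or_0 ys) a" "xs = ys @ [a]" by auto
    then show "length xs = Suc L \<and> (\<forall>j<Suc L. lh_step j (prev_or_0 xs j) (xs ! j))"
      using Suc.IH[of ys] lh_steps_snoc[of ys L a] by auto
  next
    assume xs: "length xs = Suc L \<and> (\<forall>j<Suc L. lh_step j (prev_or_0 xs j) (xs ! j))"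
    then obtain ys a where xs_eq: "xs = ys @ [a]" by (cases xs rule: rev_cases) auto
    with xs have "length ys = L" by simp
    with xs xs_eq have "ys \<in> lh_seqs L" "lh_step L (last_or_0 ys) a"
      using Suc.IH[of ys] lh_steps_snoc[of ys L a] by auto
    then show "xs \<in> lh_seqs (Suc L)" using xs_eq by auto
  qed
qed simp

lemma sum_lecture_hall_vertex:
  assumes "j \<le> m"
  shows "(\<Sum>i\<le>m. c i * real_of_int (lecture_hall_vertex s i j)) = real_of_int (s j) * (\<Sum>i\<le>j. c i)"
proof -
  have "(\<Sum>i\<le>m. c i * real_of_int (lecture_hall_vertex s i j))
      = (\<Sum>i\<in>{i\<in>{..m}. i \<le> j}. c i * real_of_int (s j))"
    by (simp add: sum.inter_filter[symmetric] lecture_hall_vertex_def if_distrib cong: if_cong)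
  also have "{i\<in>{..m}. i \<le> j} = {..j}" using assms by auto
  finally show ?thesis by (simp add: sum_distrib_left mult.commute)
qed

lemma ex_partial_sums_iff:
  fixes Q :: "nat \<Rightarrow> 'a :: ab_group_add"
  shows "(\<exists>c. (\<forall>i\<le>m. P (c i)) \<and> (\<forall>j\<le>m. Q j = (\<Sum>i\<le>j. c i)))
    \<longleftrightarrow> (\<forall>j\<le>m. P (Q j - (if j = 0 then 0 else Q (j - 1))))"
proof
  assume "\<exists>c. (\<forall>i\<le>m. P (c i)) \<and> (\<forall>j\<le>m. Q j = (\<Sum>i\<le>j. c i))"
  then obtain c where P: "\<forall>i\<le>m. P (c i)" and Q: "\<forall>j\<le>m. Q j = (\<Sum>i\<le>j. c i)" by blast
  have "Q j - (if j = 0 then 0 else Q (j - 1)) = c j" if "j \<le> m" for j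
    using that Q by (cases j) simp_all
  then show "\<forall>j\<le>m. P (Q j - (if j = 0 then 0 else Q (j - 1)))" using P by simp
next
  define c where "c i = Q i - (if i = 0 then 0 else Q (i - 1))" for i
  have "(\<Sum>i\<le>j. c i) = Q j" for j by (induction j) (simp_all add: c_def)
  moreover assume "\<forall>j\<le>m. P (Q j - (if j = 0 then 0 else Q (j - 1)))"
  ultimately show "\<exists>c. (\<forall>i\<le>m. P (c i)) \<and> (\<forall>j\<le>m. Q j = (\<Sum>i\<le>j. c i))"
    by (intro exI[of _ c]) (simp add: c_def)
qed

lemma lh_step_iff_increment:
  "lh_step j b a \<longleftrightarrow> 0 < a / (real j + 2) - b / (real j + 1) \<and> a / (real j + 2) - b / (real j + 1) < 1"
proof -
  have "lh_step j b a \<longleftrightarrow> (real j + 2) * b < (real j + 1) * a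
      \<and> (real j + 1) * a < (real j + 2) * b + (real j + 1) * (real j + 2)"
    unfolding lh_step_def of_int_less_iff[where 'a = real, symmetric] by simp
  moreover have "a / (real j + 2) - b / (real j + 1)
      = ((real j + 1) * a - (real j + 2) * b) / ((real j + 1) * (real j + 2))"
    by (simp add: field_simps)
  moreover have "0 < (real j + 1) * (real j + 2)" by simp
  ultimately show ?thesis by (simp add: zero_less_divide_iff divide_less_eq algebra_simps)
qed

lemma height_increment_iff:
  fixes b k :: int and m :: nat
  shows "0 < k - b / (real m + 1) \<and> k - b / (real m + 1) < 1
    \<longleftrightarrow> b < (int m + 1) * k \<and> (int m + 1) * k < b + (int m + 1)"
proof -
  have "0 < k - b / (real m + 1) \<and> k - b / (real m + 1) < 1
      \<longleftrightarrow> b < (real m + 1) * k \<and> (real m + 1) * k < b + (real m + 1)"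
    by (simp add: field_simps)
  also have "\<dots> \<longleftrightarrow> b < (int m + 1) * k \<and> (int m + 1) * k < b + (int m + 1)"
    unfolding of_int_less_iff[where 'a = real, symmetric] by simp
  finally show ?thesis .
qed
lemma lstar_point_iff:
  fixes m :: nat and x :: "int list" and k :: int
  assumes m: "1 \<le> m"
  defines "v \<equiv> lecture_hall_vertex (\<lambda>j. int j + 2)"
  shows "(length x = m \<and> (\<exists>c::nat \<Rightarrow> real. (\<forall>i\<le>m. 0 < c i \<and> c i < 1) \<and>
      (\<forall>j<m. real_of_int (x ! j) = (\<Sum>i\<le>m. c i * real_of_int (v i j))) \<and> real_of_int k = (\<Sum>i\<le>m. c i)))
    \<longleftrightarrow> x \<in> lh_seqs m \<and> last_or_0 x < (int m + 1) * k \<and> (int m + 1) * k < last_or_0 x + (int m + 1)"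
proof -
  define Q where "Q j = (if j < m then real_of_int (x ! j) / (real j + 2) else real_of_int k)" for j
  have coords: "(\<forall>j<m. real_of_int (x ! j) = (\<Sum>i\<le>m. c i * real_of_int (v i j))) \<and> real_of_int k = (\<Sum>i\<le>m. c i)
      \<longleftrightarrow> (\<forall>j\<le>m. Q j = (\<Sum>i\<le>j. c i))" for c :: "nat \<Rightarrow> real"
  proof -
    have "real_of_int (x ! j) = (\<Sum>i\<le>m. c i * real_of_int (v i j)) \<longleftrightarrow> Q j = (\<Sum>i\<le>j. c i)" if "j < m" for j
      using that sum_lecture_hall_vertex[of j m c] by (auto simp: Q_def v_def field_simps)
    then show ?thesis by (auto simp: Q_def le_less)
  qed
  have prev: "(if j = 0 then 0 else Q (j - 1)) = real_of_int (prev_or_0 x j) / (real j + 1)" if "j \<le> m" for j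
    using that by (cases j) (simp_all add: Q_def prev_or_0_def add.commute)
  have "(\<exists>c::nat \<Rightarrow> real. (\<forall>i\<le>m. 0 < c i \<and> c i < 1) \<and>
      (\<forall>j<m. real_of_int (x ! j) = (\<Sum>i\<le>m. c i * real_of_int (v i j))) \<and> real_of_int k = (\<Sum>i\<le>m. c i))
    \<longleftrightarrow> (\<forall>j\<le>m. 0 < Q j - real_of_int (prev_or_0 x j) / (real j + 1)
      \<and> Q j - real_of_int (prev_or_0 x j) / (real j + 1) < 1)"
    unfolding coords ex_partial_sums_iff[where P = "\<lambda>y. 0 < y \<and> y < 1"] by (simp add: prev)
  also have "\<dots> \<longleftrightarrow> (\<forall>j<m. lh_step j (prev_or_0 x j) (x ! j))
      \<and> 0 < k - prev_or_0 x m / (real m + 1) \<and> k - prev_or_0 x m / (real m + 1) < 1"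
    by (auto simp: lh_step_iff_increment Q_def le_less)
  finally have inner: "(\<exists>c::nat \<Rightarrow> real. (\<forall>i\<le>m. 0 < c i \<and> c i < 1) \<and>
      (\<forall>j<m. real_of_int (x ! j) = (\<Sum>i\<le>m. c i * real_of_int (v i j))) \<and> real_of_int k = (\<Sum>i\<le>m. c i))
    \<longleftrightarrow> (\<forall>j<m. lh_step j (prev_or_0 x j) (x ! j))
      \<and> 0 < k - prev_or_0 x m / (real m + 1) \<and> k - prev_or_0 x m / (real m + 1) < 1" .
  show ?thesis
  proof (cases "length x = m")
    case True
    then have "prev_or_0 x m = last_or_0 x" using prev_or_0_length by blast
    then show ?thesis
      unfolding inner mem_lh_seqs_iff height_increment_iff[symmetric] using True by simp
  qed (simp add: mem_lh_seqs_iff)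
qed

lemma height_iff:
  fixes b k :: int and m :: nat
  shows "b < (int m + 1) * k \<and> (int m + 1) * k < b + (int m + 1)
    \<longleftrightarrow> k = b div (int m + 1) + 1 \<and> b mod (int m + 1) \<noteq> 0"
proof -
  define K where "K = int m + 1"
  define r where "r = b mod K"
  have b: "b = K * (b div K) + r" by (simp add: r_def)
  have r: "0 \<le> r" "r < K" unfolding r_def K_def by (rule pos_mod_sign pos_mod_bound, simp)+
  have "b < K * k \<and> K * k < b + K \<longleftrightarrow> r < (k - b div K) * K \<and> (k - b div K - 1) * K < r"
    by (subst (1 2) b) (simp add: algebra_simps)
  also have "\<dots> \<longleftrightarrow> (k - b div K = 0 \<and> r < 0) \<or> (k - b div K = 1 \<and> 0 < r)"
    using r by (intro mult_window_iff) auto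
  finally show ?thesis using r unfolding K_def[symmetric] r_def[symmetric] by auto
qed

lemma sum_residue_monom:
  "(\<Sum>u\<in>{1..m}. residue_monom (int m + 1) (int u) b)
    = (if b mod (int m + 1) = 0 then 0 else monom 1 (nat (b div (int m + 1))))"
proof -
  define r where "r = b mod (int m + 1)"
  have "r < int m + 1" unfolding r_def by (rule pos_mod_bound) simp
  then have r: "0 \<le> r" "r \<le> int m" by (simp_all add: r_def)
  have "(\<Sum>u\<in>{1..m}. residue_monom (int m + 1) (int u) b)
      = (\<Sum>u\<in>{1..m}. if u = nat r then monom 1 (nat (b div (int m + 1))) else 0)"
    using r by (intro sum.cong refl) (auto simp: residue_monom_def r_def)
  also have "\<dots> = (if r = 0 then 0 else monom 1 (nat (b div (int m + 1))))"
    using r by (simp add: sum.delta') linarith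
  finally show ?thesis by (simp add: r_def)
qed

lemma sum_height_monom:
  fixes b :: int and m :: nat
  assumes b: "0 \<le> b" "b \<le> int m * (int m + 1)"
  shows "(\<Sum>k\<le>m + 1. if b < (int m + 1) * int k \<and> (int m + 1) * int k < b + (int m + 1) then monom 1 k else 0)
    = zvar * (if b mod (int m + 1) = 0 then 0 else monom 1 (nat (b div (int m + 1))))"
proof -
  define p where "p = b div (int m + 1)"
  have "p \<le> (int m * (int m + 1)) div (int m + 1)" unfolding p_def using b by (intro zdiv_mono1) auto
  then have p: "0 \<le> p" "p \<le> int m" using b by (simp_all add: p_def pos_imp_zdiv_nonneg_iff)
  have "(\<Sum>k\<le>m + 1. if b < (int m + 1) * int k \<and> (int m + 1) * int k < b + (int m + 1) then monom 1 k else 0)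
      = (\<Sum>k\<le>m + 1. if k = Suc (nat p) then (if b mod (int m + 1) = 0 then 0 else monom 1 k) else 0)"
    using p by (intro sum.cong refl) (auto simp: height_iff p_def)
  also have "\<dots> = (if b mod (int m + 1) = 0 then 0 else monom 1 (Suc (nat p)))"
    using p by (simp add: sum.delta)
  also have "\<dots> = zvar * (if b mod (int m + 1) = 0 then 0 else monom 1 (nat (b div (int m + 1))))"
    by (simp add: monom_Suc_eq_zvar p_def)
  finally show ?thesis .
qed

lemma monom_card_eq_sum:
  "finite A \<Longrightarrow> monom (int (card {x\<in>A. P x})) k = (\<Sum>x\<in>A. if P x then monom 1 k else 0)"
  by (simp add: sum.inter_filter[symmetric] of_nat_monom mult_monom)

lemma lstar_lecture_hall_eq:
  assumes m: "1 \<le> m"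
  shows "lstar m m (lecture_hall_vertex (\<lambda>j. int j + 2)) = zvar * (\<Sum>u\<in>{1..m}. lh_weight m (int u))"
proof -
  define height where "height x k \<longleftrightarrow> last_or_0 x < (int m + 1) * k \<and> (int m + 1) * k < last_or_0 x + (int m + 1)"
    for x k
  have coeff: "lstar_coeff m m (lecture_hall_vertex (\<lambda>j. int j + 2)) k = card {x \<in> lh_seqs m. height x k}" for k
    unfolding lstar_coeff_def height_def using lstar_point_iff[OF m] by (intro arg_cong[where f = card]) blast
  have "lstar m m (lecture_hall_vertex (\<lambda>j. int j + 2))
      = (\<Sum>x\<in>lh_seqs m. \<Sum>k\<le>m + 1. if height x (int k) then monom 1 k else 0)"
    unfolding lstar_def coeff monom_card_eq_sum[OF finite_lh_seqs] by (rule sum.swap)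
  also have "\<dots> = (\<Sum>x\<in>lh_seqs m. zvar * (\<Sum>u\<in>{1..m}. residue_monom (int m + 1) (int u) (last_or_0 x)))"
  proof (rule sum.cong[OF refl])
    fix x assume "x \<in> lh_seqs m"
    then have "0 \<le> last_or_0 x" "last_or_0 x \<le> int m * (int m + 1)" using lh_seqs_props by auto
    then show "(\<Sum>k\<le>m + 1. if height x (int k) then monom 1 k else 0)
        = zvar * (\<Sum>u\<in>{1..m}. residue_monom (int m + 1) (int u) (last_or_0 x))"
      unfolding height_def sum_residue_monom by (rule sum_height_monom)
  qed
  also have "\<dots> = zvar * (\<Sum>x\<in>lh_seqs m. \<Sum>u\<in>{1..m}. residue_monom (int m + 1) (int u) (last_or_0 x))"
    by (rule sum_distrib_left[symmetric])
  also have "\<dots> = zvar * (\<Sum>u\<in>{1..m}. lh_weight m (int u))"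
    unfolding lh_weight_def by (subst sum.swap) (rule refl)
  finally show ?thesis .
qed

theorem theorem4p1:
  fixes n :: nat
  assumes "n \<ge> 2"
  defines "s \<equiv> (\<lambda>j::nat. int j + 2)"
  shows "s_derangement_poly (n - 1) s = derangement_poly n
    \<and> local_h {1..n} barycentric_sd = lstar (n - 1) (n - 1) (lecture_hall_vertex s)"
proof -
  define m where "m = n - 1"
  have m: "1 \<le> m" and n: "n = Suc m" using assms(1) by (simp_all add: m_def)
  have "lstar m m (lecture_hall_vertex s) = zvar * (\<Sum>u\<in>{1..m}. lh_weight m (int u))"
    unfolding s_def by (rule lstar_lecture_hall_eq[OF m])
  also have "\<dots> = derangement_poly n"
    using lh_weight_eq_derangement_poly[of m]
    by (simp add: sum_distrib_left n derangement_poly_Suc_eq_sum_last)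
  finally show ?thesis
    using local_h_barycentric_sd_eq_derangement_poly[of n] by (simp add: s_derangement_poly_def m_def)
qed

end
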